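(* Let $n\ge3$, $\xi\in[0,1]$, and consider the star-to-complete network with adjacency matrix $\mathbf A^\xi$, $\theta_i=1$ for all $i$, and $F(p)=p$ on $[0,1]$. If the optimal value of problem (P4) (mixed-autonomy system) is strictly greater than the optimal value of (P4) with the additional constraint $z_i=0$ for all $i$ (human-only system), then an optimal solution of the mixed-autonomy problem (P4) satisfies $z_i>0$ for all $i=1,\dots,n$.
   Context: Star-to-complete network: for $n\ge3$ and $\xi\in[0,1]$, $\mathbf A^\xi=[\alpha_{ij}]$ is the $n\times n$ matrix with $\alpha_{ii}=0$ for all $i$, $\alpha_{1j}=\frac1{n-1}$ for $j\ne1$, $\alpha_{i1}=c_1:=\frac{\xi}{n-1}+(1-\xi)$ for $i\ne1$, and $\alpha_{ij}=c_2:=\frac{\xi}{n-1}$ for $i,j\ne1$, $i\ne j$. Parameters: $\beta\in(0,1)$, $\omega>0$, $s\ge0$. Problem (P4): maximize over $\{p_i,\delta_i,x_i,y_{ij},z_i,r_{ij}\}$ the objective $\sum_i p_i\theta_i(1-F(p_i))-\omega\sum_i\delta_i-s\sum_i z_i$ subject to, for all $i$: $d_i=\theta_i(1-F(p_i))$; $x_i=\beta\big[\sum_j\alpha_{ji}\min\{x_j,d_j\}+\sum_j y_{ji}\big]+\delta_i$; $\sum_j y_{ij}=\max\{x_i-d_i,0\}$; $z_i=\sum_j\alpha_{ji}\max\{d_j-x_j,0\}+\sum_j r_{ji}$; $\sum_j r_{ij}=z_i-\max\{d_i-x_i,0\}$; all variables nonnegative. *)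

theory Defs
  imports Complex_Main
begin

text \<open>Star-to-complete network on nodes 1..n (node 1 is the hub).\<close>
definition alpha :: "nat \<Rightarrow> real \<Rightarrow> nat \<Rightarrow> nat \<Rightarrow> real" where
  "alpha n \<xi> i j =
     (if i = j then 0
      else if i = 1 then 1 / (real n - 1)
      else if j = 1 then \<xi> / (real n - 1) + (1 - \<xi>)
      else \<xi> / (real n - 1))"

definition Funif :: "real \<Rightarrow> real" where
  "Funif p = max 0 (min 1 p)"

text \<open>Demand with theta_i = 1.\<close>
definition demand :: "real \<Rightarrow> real" where
  "demand p = 1 * (1 - Funif p)"

definition feasible_P4 ::
  "nat \<Rightarrow> real \<Rightarrow> real \<Rightarrow> (nat \<Rightarrow> real) \<Rightarrow> (nat \<Rightarrow> real) \<Rightarrow> (nat \<Rightarrow> real)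
     \<Rightarrow> (nat \<Rightarrow> nat \<Rightarrow> real) \<Rightarrow> (nat \<Rightarrow> real) \<Rightarrow> (nat \<Rightarrow> nat \<Rightarrow> real) \<Rightarrow> bool" where
  "feasible_P4 n \<xi> \<beta> p \<delta> x y z r \<longleftrightarrow>
     (\<forall>i\<in>{1..n}.
        x i = \<beta> * ((\<Sum>j\<in>{1..n}. alpha n \<xi> j i * min (x j) (demand (p j)))
                    + (\<Sum>j\<in>{1..n}. y j i)) + \<delta> i
      \<and> (\<Sum>j\<in>{1..n}. y i j) = max (x i - demand (p i)) 0
      \<and> z i = (\<Sum>j\<in>{1..n}. alpha n \<xi> j i * max (demand (p j) - x j) 0)
              + (\<Sum>j\<in>{1..n}. r j i)
      \<and> (\<Sum>j\<in>{1..n}. r i j) = z i - max (demand (p i) - x i) 0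
      \<and> p i \<ge> 0 \<and> \<delta> i \<ge> 0 \<and> x i \<ge> 0 \<and> z i \<ge> 0 \<and> demand (p i) \<ge> 0
      \<and> (\<forall>j\<in>{1..n}. y i j \<ge> 0 \<and> r i j \<ge> 0))"

definition obj_P4 ::
  "nat \<Rightarrow> real \<Rightarrow> real \<Rightarrow> (nat \<Rightarrow> real) \<Rightarrow> (nat \<Rightarrow> real) \<Rightarrow> (nat \<Rightarrow> real) \<Rightarrow> real" where
  "obj_P4 n \<omega> s p \<delta> z =
     (\<Sum>i\<in>{1..n}. p i * demand (p i)) - \<omega> * (\<Sum>i\<in>{1..n}. \<delta> i) - s * (\<Sum>i\<in>{1..n}. z i)"

definition optval_mixed :: "nat \<Rightarrow> real \<Rightarrow> real \<Rightarrow> real \<Rightarrow> real \<Rightarrow> real" where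
  "optval_mixed n \<xi> \<beta> \<omega> s =
     Sup {obj_P4 n \<omega> s p \<delta> z | p \<delta> x y z r. feasible_P4 n \<xi> \<beta> p \<delta> x y z r}"

definition optval_human :: "nat \<Rightarrow> real \<Rightarrow> real \<Rightarrow> real \<Rightarrow> real \<Rightarrow> real" where
  "optval_human n \<xi> \<beta> \<omega> s =
     Sup {obj_P4 n \<omega> s p \<delta> z | p \<delta> x y z r. feasible_P4 n \<xi> \<beta> p \<delta> x y z r
                                        \<and> (\<forall>i\<in>{1..n}. z i = 0)}"

definition optimal_P4 ::
  "nat \<Rightarrow> real \<Rightarrow> real \<Rightarrow> real \<Rightarrow> real \<Rightarrow> (nat \<Rightarrow> real) \<Rightarrow> (nat \<Rightarrow> real) \<Rightarrow> (nat \<Rightarrow> real)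
     \<Rightarrow> (nat \<Rightarrow> nat \<Rightarrow> real) \<Rightarrow> (nat \<Rightarrow> real) \<Rightarrow> (nat \<Rightarrow> nat \<Rightarrow> real) \<Rightarrow> bool" where
  "optimal_P4 n \<xi> \<beta> \<omega> s p \<delta> x y z r \<longleftrightarrow>
     feasible_P4 n \<xi> \<beta> p \<delta> x y z r \<and>
     (\<forall>p' \<delta>' x' y' z' r'. feasible_P4 n \<xi> \<beta> p' \<delta>' x' y' z' r' \<longrightarrow>
        obj_P4 n \<omega> s p' \<delta>' z' \<le> obj_P4 n \<omega> s p \<delta> z)"

end

theory Submission
  imports Defs
begin

(* (P4) reduces to a problem in the demands d_i = 1 - p_i and the parts m_i = min x_i d_i of
   them served by human-driven vehicles.  An optimal flow keeps exactly
   max m_i (beta * inflow m i) vehicles at node i, ships the idle surplus along a proportional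
   transport plan, and serves the rest u = d - m autonomously, which needs at least
   max u_i (inflow u i) rebalancing vehicles at i.  If z_i = 0 at an optimum, no autonomous
   vehicle travels to i, so every node feeding i is served by humans alone.  Unless xi = 0 and
   i is a leaf, every node feeds i: the optimum is then human-only, contradicting the strict
   gap.  In the star (xi = 0) with a fully served hub, either autonomy is so expensive
   (omega (1 - beta) (1 + beta) <= 2 s) that full human service is at least as good, or
   first-order conditions for small changes of prices and stocks rule out a partially served
   leaf. *)

lemma sum_split_hub:
  fixes f :: "nat \<Rightarrow> 'a::comm_monoid_add"
  assumes "n \<ge> 1"
  shows "(\<Sum>i\<in>{1..n}. f i) = f 1 + (\<Sum>i\<in>{2..n}. f i)"
proof -
  have "{1..n} = insert 1 {2..n}" using assms by auto
  then show ?thesis by simp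
qed

lemma sum_change_one:
  fixes f g :: "'b \<Rightarrow> 'a::ab_group_add"
  assumes "finite A" "j \<in> A" "\<And>l. l \<in> A \<Longrightarrow> l \<noteq> j \<Longrightarrow> g l = f l"
  shows "sum g A = sum f A - f j + g j"
proof -
  have "sum g A = g j + sum g (A - {j})" and "sum f A = f j + sum f (A - {j})"
    using assms(1,2) by (simp_all add: sum.remove)
  moreover have "sum g (A - {j}) = sum f (A - {j})"
    using assms(3) by (intro sum.cong) auto
  ultimately show ?thesis by simp
qed

lemma proportional_plan_marginals:
  fixes a b :: "'a \<Rightarrow> real"
  assumes "finite A" "\<forall>j\<in>A. 0 \<le> a j" "\<forall>j\<in>A. 0 \<le> b j" "sum a A = sum b A" "i \<in> A"
  shows "(\<Sum>j\<in>A. a i * b j / sum a A) = a i"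
    and "(\<Sum>j\<in>A. a j * b i / sum a A) = b i"
proof -
  have "(\<Sum>j\<in>A. a i * b j / sum a A) = a i * sum b A / sum a A"
    and "(\<Sum>j\<in>A. a j * b i / sum a A) = sum a A * b i / sum a A"
    by (simp_all add: sum_divide_distrib[symmetric] sum_distrib_left sum_distrib_right)
  moreover have "a i = 0" "b i = 0" if "sum a A = 0"
    using that assms sum_nonneg_eq_0_iff[of A a] sum_nonneg_eq_0_iff[of A b] by auto
  ultimately show "(\<Sum>j\<in>A. a i * b j / sum a A) = a i" "(\<Sum>j\<in>A. a j * b i / sum a A) = b i"
    using assms(4) by (cases "sum a A = 0"; simp)+
qed

lemma first_order_nonpos:
  fixes a c :: real
  assumes "0 < a" "\<And>e. 0 < e \<Longrightarrow> e \<le> a \<Longrightarrow> e * (c - e) \<le> 0"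
  shows "c \<le> 0"
proof (rule ccontr)
  assume "\<not> c \<le> 0"
  then have "0 < min a (c / 2)" "min a (c / 2) \<le> a" "0 < min a (c / 2) * (c - min a (c / 2))"
    using assms(1) by (auto intro!: mult_pos_pos)
  then show False
    using assms(2)[of "min a (c / 2)"] by linarith
qed

lemma alpha_nonneg:
  assumes "n \<ge> 2" "0 \<le> \<xi>" "\<xi> \<le> 1"
  shows "0 \<le> alpha n \<xi> i j"
  using assms unfolding alpha_def by (auto intro: add_nonneg_nonneg)

lemma alpha_pos:
  assumes "n \<ge> 2" "0 \<le> \<xi>" "\<xi> \<le> 1" "i \<noteq> j" "0 < \<xi> \<or> i = 1 \<or> j = 1"
  shows "0 < alpha n \<xi> i j"
proof -
  have "0 < \<xi> / (real n - 1) + (1 - \<xi>)"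
    using assms by (cases "\<xi> = 1") (auto intro: add_nonneg_pos add_pos_nonneg)
  then show ?thesis
    using assms unfolding alpha_def by auto
qed

lemma alpha_row_sum:
  assumes "n \<ge> 2" "j \<in> {1..n}"
  shows "(\<Sum>i\<in>{1..n}. alpha n \<xi> j i) = 1"
proof (cases "j = 1")
  case True
  have "(\<Sum>i\<in>{2..n}. alpha n \<xi> 1 i) = (\<Sum>i\<in>{2..n}. 1 / (real n - 1))"
    by (rule sum.cong) (auto simp: alpha_def)
  then show ?thesis
    using True assms sum_split_hub[of n "alpha n \<xi> 1"] by (simp add: alpha_def)
next
  case False
  define a where "a = \<xi> / (real n - 1)"
  define f where "f i = (if i = 1 then a + (1 - \<xi>) else a)" for i :: nat
  have "(\<Sum>i\<in>{1..n}. alpha n \<xi> j i) = sum f {1..n} - f j + alpha n \<xi> j j"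
    by (rule sum_change_one) (use assms False in \<open>auto simp: alpha_def a_def f_def\<close>)
  also have "sum f {1..n} = (\<Sum>i\<in>{1..n}. a) - a + f 1"
    by (rule sum_change_one) (use assms in \<open>auto simp: f_def\<close>)
  finally have "(\<Sum>i\<in>{1..n}. alpha n \<xi> j i) = (real n - 1) * a + (1 - \<xi>)"
    using False by (simp add: f_def alpha_def algebra_simps)
  then show ?thesis
    using assms unfolding a_def by simp
qed

definition inflow :: "nat \<Rightarrow> real \<Rightarrow> (nat \<Rightarrow> real) \<Rightarrow> nat \<Rightarrow> real" where
  "inflow n \<xi> v i = (\<Sum>j\<in>{1..n}. alpha n \<xi> j i * v j)"

lemma sum_inflow:
  assumes "n \<ge> 2"
  shows "(\<Sum>i\<in>{1..n}. inflow n \<xi> v i) = (\<Sum>j\<in>{1..n}. v j)"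
proof -
  have "(\<Sum>i\<in>{1..n}. inflow n \<xi> v i) = (\<Sum>j\<in>{1..n}. (\<Sum>i\<in>{1..n}. alpha n \<xi> j i) * v j)"
    unfolding inflow_def by (subst sum.swap) (simp add: sum_distrib_right)
  then show ?thesis
    using alpha_row_sum[OF assms] by simp
qed

lemma inflow_nonneg:
  assumes "n \<ge> 2" "0 \<le> \<xi>" "\<xi> \<le> 1" "\<forall>j\<in>{1..n}. 0 \<le> v j"
  shows "0 \<le> inflow n \<xi> v i"
  unfolding inflow_def using assms alpha_nonneg[OF assms(1-3)] by (intro sum_nonneg) auto

lemma inflow_cong:
  "(\<And>j. j \<in> {1..n} \<Longrightarrow> v j = w j) \<Longrightarrow> inflow n \<xi> v i = inflow n \<xi> w i"
  unfolding inflow_def by (intro sum.cong) auto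

lemma inflow_eq_zero_imp:
  assumes "n \<ge> 2" "0 \<le> \<xi>" "\<xi> \<le> 1" "\<forall>j\<in>{1..n}. 0 \<le> v j" "inflow n \<xi> v i = 0"
    and "j \<in> {1..n}" "0 < alpha n \<xi> j i"
  shows "v j = 0"
proof -
  have "\<forall>j\<in>{1..n}. alpha n \<xi> j i * v j = 0"
    using assms(5) alpha_nonneg[OF assms(1-3)] assms(4) unfolding inflow_def
    by (subst sum_nonneg_eq_0_iff[symmetric]) auto
  then show ?thesis
    using assms(6,7) by fastforce
qed

lemma inflow_star_hub:
  assumes "n \<ge> 2"
  shows "inflow n 0 v 1 = (\<Sum>l\<in>{2..n}. v l)"
proof -
  have "(\<Sum>l\<in>{2..n}. alpha n 0 l 1 * v l) = (\<Sum>l\<in>{2..n}. v l)"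
    by (rule sum.cong) (auto simp: alpha_def)
  then show ?thesis
    unfolding inflow_def using assms sum_split_hub[of n "\<lambda>j. alpha n 0 j 1 * v j"]
    by (simp add: alpha_def)
qed

lemma inflow_star_leaf:
  assumes "n \<ge> 2" "l \<in> {2..n}"
  shows "inflow n 0 v l = v 1 / (real n - 1)"
proof -
  have "(\<Sum>j\<in>{2..n}. alpha n 0 j l * v j) = 0"
    by (rule sum.neutral) (use assms in \<open>auto simp: alpha_def\<close>)
  then show ?thesis
    unfolding inflow_def using assms sum_split_hub[of n "\<lambda>j. alpha n 0 j l * v j"]
    by (auto simp: alpha_def)
qed

section \<open>Reduction of (P4) to served demands\<close>

lemma demand_bounds: "0 \<le> demand q" "demand q \<le> 1"
  unfolding demand_def Funif_def by auto

lemma demand_of_price: "0 \<le> d \<Longrightarrow> d \<le> 1 \<Longrightarrow> demand (1 - d) = d"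
  unfolding demand_def Funif_def by auto

lemma revenue_eq: "0 \<le> q \<Longrightarrow> q * demand q = demand q * (1 - demand q)"
  unfolding demand_def Funif_def by (cases "q \<le> 1") (auto simp: algebra_simps)

text \<open>In the reduced problem \<open>d i\<close> is the demand at node \<open>i\<close> and \<open>m i\<close> the part of it served by
  human-driven vehicles.  Vehicles may stay idle at a node only when its demand is fully served,
  so a node with \<open>m i < d i\<close> keeps no more vehicles than \<open>m i\<close>.\<close>

definition min_fleet :: "nat \<Rightarrow> real \<Rightarrow> real \<Rightarrow> (nat \<Rightarrow> real) \<Rightarrow> real" where
  "min_fleet n \<xi> \<beta> m = (\<Sum>i\<in>{1..n}. max (m i) (\<beta> * inflow n \<xi> m i))"

definition min_rebalancing :: "nat \<Rightarrow> real \<Rightarrow> (nat \<Rightarrow> real) \<Rightarrow> real" where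
  "min_rebalancing n \<xi> u = (\<Sum>i\<in>{1..n}. max (u i) (inflow n \<xi> u i))"

definition reduced_obj ::
  "nat \<Rightarrow> real \<Rightarrow> real \<Rightarrow> real \<Rightarrow> real \<Rightarrow> (nat \<Rightarrow> real) \<Rightarrow> (nat \<Rightarrow> real) \<Rightarrow> real" where
  "reduced_obj n \<xi> \<beta> \<omega> s d m =
     (\<Sum>i\<in>{1..n}. d i * (1 - d i)) - \<omega> * (1 - \<beta>) * min_fleet n \<xi> \<beta> m
       - s * min_rebalancing n \<xi> (\<lambda>i. d i - m i)"

definition reduced_feasible :: "nat \<Rightarrow> real \<Rightarrow> real \<Rightarrow> (nat \<Rightarrow> real) \<Rightarrow> (nat \<Rightarrow> real) \<Rightarrow> bool" where
  "reduced_feasible n \<xi> \<beta> d m \<longleftrightarrow>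
     (\<forall>i\<in>{1..n}. 0 \<le> m i \<and> m i \<le> d i \<and> d i \<le> 1 \<and> (m i < d i \<longrightarrow> \<beta> * inflow n \<xi> m i \<le> m i))"

lemma reduced_obj_cong:
  assumes "\<And>i. i \<in> {1..n} \<Longrightarrow> m i = m' i"
  shows "reduced_obj n \<xi> \<beta> \<omega> s d m = reduced_obj n \<xi> \<beta> \<omega> s d m'"
proof -
  have "min_fleet n \<xi> \<beta> m = min_fleet n \<xi> \<beta> m'"
    unfolding min_fleet_def using assms inflow_cong[of n m m'] by (intro sum.cong) auto
  moreover have "min_rebalancing n \<xi> (\<lambda>i. d i - m i) = min_rebalancing n \<xi> (\<lambda>i. d i - m' i)"
    unfolding min_rebalancing_def using assms inflow_cong[of n "\<lambda>i. d i - m i" "\<lambda>i. d i - m' i"]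
    by (intro sum.cong) auto
  ultimately show ?thesis
    unfolding reduced_obj_def by simp
qed

locale feasible_point =
  fixes n :: nat and \<xi> \<beta> :: real and p \<delta> x :: "nat \<Rightarrow> real" and y :: "nat \<Rightarrow> nat \<Rightarrow> real"
    and z :: "nat \<Rightarrow> real" and r :: "nat \<Rightarrow> nat \<Rightarrow> real"
  assumes n2: "n \<ge> 2" and beta_nonneg: "0 \<le> \<beta>"
    and feasible: "feasible_P4 n \<xi> \<beta> p \<delta> x y z r"
begin

lemma
  assumes "i \<in> {1..n}"
  shows stock_eq: "x i = \<beta> * (inflow n \<xi> (\<lambda>j. min (x j) (demand (p j))) i + (\<Sum>j\<in>{1..n}. y j i)) + \<delta> i"
    and excess_eq: "(\<Sum>j\<in>{1..n}. y i j) = max (x i - demand (p i)) 0"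
    and rebalancing_eq: "z i = inflow n \<xi> (\<lambda>j. max (demand (p j) - x j) 0) i + (\<Sum>j\<in>{1..n}. r j i)"
    and rebalancing_out_eq: "(\<Sum>j\<in>{1..n}. r i j) = z i - max (demand (p i) - x i) 0"
    and feasible_nonneg: "0 \<le> p i" "0 \<le> \<delta> i" "0 \<le> x i"
      "\<And>j. j \<in> {1..n} \<Longrightarrow> 0 \<le> y i j" "\<And>j. j \<in> {1..n} \<Longrightarrow> 0 \<le> r i j"
  using feasible assms unfolding feasible_P4_def inflow_def by blast+

lemma stock_lower_bound:
  assumes "i \<in> {1..n}"
  shows "max (min (x i) (demand (p i))) (\<beta> * inflow n \<xi> (\<lambda>j. min (x j) (demand (p j))) i) \<le> x i"
proof -
  have "0 \<le> (\<Sum>j\<in>{1..n}. y j i)"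
    using feasible_nonneg(4) assms by (intro sum_nonneg) auto
  then show ?thesis
    using stock_eq[OF assms] feasible_nonneg(2)[OF assms] beta_nonneg
    by (simp add: distrib_left add_increasing2)
qed

lemma rebalancing_lower_bound:
  assumes "i \<in> {1..n}"
  shows "max (demand (p i) - min (x i) (demand (p i)))
      (inflow n \<xi> (\<lambda>j. demand (p j) - min (x j) (demand (p j))) i) \<le> z i"
proof -
  have unserved: "demand (p j) - min (x j) (demand (p j)) = max (demand (p j) - x j) 0" for j
    by auto
  have "0 \<le> (\<Sum>j\<in>{1..n}. r j i)" and "0 \<le> (\<Sum>j\<in>{1..n}. r i j)"
    using feasible_nonneg(5) assms by (auto intro: sum_nonneg)
  then show ?thesis
    using rebalancing_eq[OF assms] rebalancing_out_eq[OF assms] unfolding unserved by simp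
qed

text \<open>Every vehicle not retained in the fleet (a fraction \<open>1 - \<beta>\<close> of it) has to be injected again.\<close>

lemma sum_injection: "(\<Sum>i\<in>{1..n}. \<delta> i) = (1 - \<beta>) * (\<Sum>i\<in>{1..n}. x i)"
proof -
  let ?m = "\<lambda>j. min (x j) (demand (p j))"
  have "(\<Sum>i\<in>{1..n}. x i) = (\<Sum>i\<in>{1..n}. \<beta> * (inflow n \<xi> ?m i + (\<Sum>j\<in>{1..n}. y j i)) + \<delta> i)"
    using stock_eq by (rule sum.cong[OF refl])
  also have "\<dots> = \<beta> * ((\<Sum>i\<in>{1..n}. inflow n \<xi> ?m i) + (\<Sum>i\<in>{1..n}. \<Sum>j\<in>{1..n}. y j i))
      + (\<Sum>i\<in>{1..n}. \<delta> i)"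
    by (simp add: sum.distrib sum_distrib_left[symmetric] distrib_left)
  also have "(\<Sum>i\<in>{1..n}. \<Sum>j\<in>{1..n}. y j i) = (\<Sum>j\<in>{1..n}. \<Sum>i\<in>{1..n}. y j i)"
    by (rule sum.swap)
  also have "\<dots> = (\<Sum>j\<in>{1..n}. max (x j - demand (p j)) 0)"
    using excess_eq by (rule sum.cong[OF refl])
  also have "(\<Sum>i\<in>{1..n}. inflow n \<xi> ?m i) = (\<Sum>j\<in>{1..n}. ?m j)"
    by (rule sum_inflow[OF n2])
  also have "(\<Sum>j\<in>{1..n}. ?m j) + (\<Sum>j\<in>{1..n}. max (x j - demand (p j)) 0) = (\<Sum>i\<in>{1..n}. x i)"
    unfolding sum.distrib[symmetric] by (intro sum.cong) auto
  finally have "(\<Sum>i\<in>{1..n}. \<delta> i) = (\<Sum>i\<in>{1..n}. x i) - \<beta> * (\<Sum>i\<in>{1..n}. x i)"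
    by linarith
  then show ?thesis
    by (simp add: left_diff_distrib)
qed

lemma reduced_feasible_served:
  "reduced_feasible n \<xi> \<beta> (\<lambda>i. demand (p i)) (\<lambda>i. min (x i) (demand (p i)))"
  unfolding reduced_feasible_def
proof
  fix i assume i: "i \<in> {1..n}"
  then have "0 \<le> x i" by (rule feasible_nonneg)
  then show "0 \<le> min (x i) (demand (p i)) \<and> min (x i) (demand (p i)) \<le> demand (p i) \<and> demand (p i) \<le> 1
    \<and> (min (x i) (demand (p i)) < demand (p i)
         \<longrightarrow> \<beta> * inflow n \<xi> (\<lambda>j. min (x j) (demand (p j))) i \<le> min (x i) (demand (p i)))"
    using stock_lower_bound[OF i] demand_bounds by auto
qed

lemma obj_le_reduced_obj:
  assumes "0 \<le> \<omega>" "\<beta> \<le> 1" "0 \<le> s"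
  shows "obj_P4 n \<omega> s p \<delta> z
    \<le> reduced_obj n \<xi> \<beta> \<omega> s (\<lambda>i. demand (p i)) (\<lambda>i. min (x i) (demand (p i)))"
proof -
  have "min_fleet n \<xi> \<beta> (\<lambda>i. min (x i) (demand (p i))) \<le> (\<Sum>i\<in>{1..n}. x i)"
    unfolding min_fleet_def using stock_lower_bound by (intro sum_mono) auto
  then have "\<omega> * (1 - \<beta>) * min_fleet n \<xi> \<beta> (\<lambda>i. min (x i) (demand (p i)))
      \<le> \<omega> * (1 - \<beta>) * (\<Sum>i\<in>{1..n}. x i)"
    by (rule mult_left_mono) (use assms in simp)
  then have fleet: "\<omega> * (1 - \<beta>) * min_fleet n \<xi> \<beta> (\<lambda>i. min (x i) (demand (p i)))
      \<le> \<omega> * (\<Sum>i\<in>{1..n}. \<delta> i)"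
    unfolding sum_injection by (simp add: mult.assoc)
  have "min_rebalancing n \<xi> (\<lambda>i. demand (p i) - min (x i) (demand (p i))) \<le> (\<Sum>i\<in>{1..n}. z i)"
    unfolding min_rebalancing_def using rebalancing_lower_bound by (intro sum_mono) auto
  then have "s * min_rebalancing n \<xi> (\<lambda>i. demand (p i) - min (x i) (demand (p i)))
      \<le> s * (\<Sum>i\<in>{1..n}. z i)"
    using assms by (simp add: mult_left_mono)
  moreover have "(\<Sum>i\<in>{1..n}. p i * demand (p i)) = (\<Sum>i\<in>{1..n}. demand (p i) * (1 - demand (p i)))"
    using feasible_nonneg(1) revenue_eq by (intro sum.cong) auto
  ultimately show ?thesis
    using fleet unfolding obj_P4_def reduced_obj_def by linarith
qed

end

section \<open>Realizing reduced points by flows\<close>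

text \<open>The surplus \<open>a\<close> that a node must ship out never exceeds, in total, the stock \<open>e\<close> left there
  after the arrivals, because the arrivals are only a fraction \<open>\<beta>\<close> of the fleet.  Scaling \<open>e\<close>
  down to \<open>b\<close> with the same total as \<open>a\<close> and shipping proportionally leaves the nonnegative rest
  \<open>e - \<beta> * b\<close> to be injected.\<close>

lemma vehicle_flow_exists:
  assumes "n \<ge> 2" "0 \<le> \<beta>" "\<beta> \<le> 1" "\<forall>i\<in>{1..n}. 0 \<le> m i"
  obtains y \<delta> where
    "\<forall>i\<in>{1..n}. max (m i) (\<beta> * inflow n \<xi> m i) = \<beta> * (inflow n \<xi> m i + (\<Sum>j\<in>{1..n}. y j i)) + \<delta> i"
    "\<forall>i\<in>{1..n}. (\<Sum>j\<in>{1..n}. y i j) = max (m i) (\<beta> * inflow n \<xi> m i) - m i"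
    "\<forall>i\<in>{1..n}. 0 \<le> \<delta> i \<and> (\<forall>j\<in>{1..n}. 0 \<le> y i j)"
proof -
  define I where "I = {1..n}"
  define a where "a i = max (m i) (\<beta> * inflow n \<xi> m i) - m i" for i
  define e where "e i = max (m i) (\<beta> * inflow n \<xi> m i) - \<beta> * inflow n \<xi> m i" for i
  define b where "b i = sum a I / sum e I * e i" for i
  define y where "y i j = a i * b j / sum a I" for i j
  define \<delta> where "\<delta> i = e i - \<beta> * b i" for i
  have "sum e I - sum a I = (\<Sum>i\<in>I. m i - \<beta> * inflow n \<xi> m i)"
    unfolding a_def e_def by (simp add: sum_subtractf[symmetric])
  also have "\<dots> = (1 - \<beta>) * sum m I"
    unfolding I_def sum_subtractf sum_distrib_left[symmetric] sum_inflow[OF assms(1)]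
    by (simp add: algebra_simps)
  also have "\<dots> \<ge> 0"
    using assms(3,4) unfolding I_def by (auto intro!: sum_nonneg mult_nonneg_nonneg)
  finally have ae: "sum a I \<le> sum e I"
    by simp
  have a0: "\<forall>j\<in>I. 0 \<le> a j" and e0: "\<forall>j\<in>I. 0 \<le> e j"
    unfolding a_def e_def by auto
  then have a_sum: "0 \<le> sum a I"
    by (auto intro: sum_nonneg)
  have ratio: "0 \<le> sum a I / sum e I" "sum a I / sum e I \<le> 1"
    using ae a_sum by (cases "sum e I = 0"; simp add: divide_le_eq_1)+
  have b0: "\<forall>j\<in>I. 0 \<le> b j" and be: "\<forall>j\<in>I. b j \<le> e j"
    unfolding b_def using e0 mult_nonneg_nonneg[OF ratio(1)] mult_left_le_one_le[OF _ ratio] by blast+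
  have "sum b I = sum a I / sum e I * sum e I"
    unfolding b_def by (rule sum_distrib_left[symmetric])
  then have "sum a I = sum b I"
    using ae a_sum by (cases "sum e I = 0") simp_all
  then have "(\<Sum>j\<in>I. y i j) = a i" "(\<Sum>j\<in>I. y j i) = b i" if "i \<in> I" for i
    unfolding y_def using proportional_plan_marginals[OF _ a0 b0] that by (simp_all add: I_def)
  moreover have "0 \<le> \<delta> i" if "i \<in> I" for i
  proof -
    have "\<beta> * b i \<le> b i"
      using b0 that assms(2,3) by (simp add: mult_left_le_one_le)
    then show ?thesis
      using be that unfolding \<delta>_def by fastforce
  qed
  moreover have "\<forall>i\<in>I. \<forall>j\<in>I. 0 \<le> y i j"
    using a0 b0 a_sum unfolding y_def by auto
  ultimately show ?thesis
    by (intro that[of y \<delta>]) (simp_all add: I_def a_def e_def \<delta>_def distrib_left)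
qed

lemma rebalancing_flow_exists:
  assumes "n \<ge> 2"
  obtains r where
    "\<forall>i\<in>{1..n}. max (u i) (inflow n \<xi> u i) = inflow n \<xi> u i + (\<Sum>j\<in>{1..n}. r j i)"
    "\<forall>i\<in>{1..n}. (\<Sum>j\<in>{1..n}. r i j) = max (u i) (inflow n \<xi> u i) - u i"
    "\<forall>i\<in>{1..n}. \<forall>j\<in>{1..n}. 0 \<le> r i j"
proof -
  define I where "I = {1..n}"
  define a where "a i = max (u i) (inflow n \<xi> u i) - u i" for i
  define b where "b i = max (u i) (inflow n \<xi> u i) - inflow n \<xi> u i" for i
  define r where "r i j = a i * b j / sum a I" for i j
  have a0: "\<forall>j\<in>I. 0 \<le> a j" and b0: "\<forall>j\<in>I. 0 \<le> b j"
    unfolding a_def b_def by auto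
  have "sum a I - sum b I = sum (inflow n \<xi> u) I - sum u I"
    unfolding a_def b_def by (simp add: sum_subtractf[symmetric])
  then have "sum a I = sum b I"
    unfolding I_def sum_inflow[OF assms] by simp
  then have "(\<Sum>j\<in>I. r i j) = a i" "(\<Sum>j\<in>I. r j i) = b i" if "i \<in> I" for i
    unfolding r_def using proportional_plan_marginals[OF _ a0 b0] that by (simp_all add: I_def)
  moreover have "\<forall>i\<in>I. \<forall>j\<in>I. 0 \<le> r i j"
    using a0 b0 unfolding r_def by (auto intro!: divide_nonneg_nonneg sum_nonneg)
  ultimately show ?thesis
    by (intro that[of r]) (simp_all add: I_def a_def b_def)
qed

lemma obj_P4_eq_reduced_obj:
  assumes "n \<ge> 2" "0 \<le> \<beta>" "feasible_P4 n \<xi> \<beta> p \<delta> x y z r"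
    and "\<And>i. i \<in> {1..n} \<Longrightarrow> 0 \<le> d i \<and> d i \<le> 1 \<and> p i = 1 - d i
      \<and> x i = max (m i) (\<beta> * inflow n \<xi> m i) \<and> z i = max (d i - m i) (inflow n \<xi> (\<lambda>j. d j - m j) i)"
  shows "obj_P4 n \<omega> s p \<delta> z = reduced_obj n \<xi> \<beta> \<omega> s d m"
proof -
  interpret feasible_point n \<xi> \<beta> p \<delta> x y z r
    using assms(1-3) by unfold_locales
  have "(\<Sum>i\<in>{1..n}. \<delta> i) = (1 - \<beta>) * min_fleet n \<xi> \<beta> m"
    unfolding sum_injection min_fleet_def using assms(4) by simp
  moreover have "(\<Sum>i\<in>{1..n}. p i * demand (p i)) = (\<Sum>i\<in>{1..n}. d i * (1 - d i))"
    using assms(4) demand_of_price by (intro sum.cong) auto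
  moreover have "(\<Sum>i\<in>{1..n}. z i) = min_rebalancing n \<xi> (\<lambda>i. d i - m i)"
    unfolding min_rebalancing_def using assms(4) by simp
  ultimately show ?thesis
    unfolding obj_P4_def reduced_obj_def by (simp add: mult.assoc)
qed

lemma reduced_point_realizable:
  assumes "n \<ge> 2" "0 \<le> \<beta>" "\<beta> \<le> 1" and red: "reduced_feasible n \<xi> \<beta> d m"
  obtains p \<delta> x y z r where "feasible_P4 n \<xi> \<beta> p \<delta> x y z r"
    "obj_P4 n \<omega> s p \<delta> z = reduced_obj n \<xi> \<beta> \<omega> s d m"
    "\<forall>i\<in>{1..n}. z i = max (d i - m i) (inflow n \<xi> (\<lambda>j. d j - m j) i)"
proof -
  define u where "u i = d i - m i" for i
  define p where "p i = 1 - d i" for i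
  define x where "x i = max (m i) (\<beta> * inflow n \<xi> m i)" for i
  define z where "z i = max (u i) (inflow n \<xi> u i)" for i
  have bounds: "0 \<le> m i" "m i \<le> d i" "d i \<le> 1" "m i \<le> x i" "m i < d i \<Longrightarrow> x i = m i"
    if "i \<in> {1..n}" for i
    using red that unfolding reduced_feasible_def x_def by auto
  have dem: "demand (p i) = d i" if "i \<in> {1..n}" for i
    using bounds[OF that] unfolding p_def by (simp add: demand_of_price)
  have served: "min (x i) (demand (p i)) = m i" and unserved: "max (demand (p i) - x i) 0 = u i"
    and excess: "max (x i - demand (p i)) 0 = x i - m i" if "i \<in> {1..n}" for i
    using bounds[OF that] dem[OF that] unfolding u_def by (cases "m i < d i"; auto)+
  obtain y \<delta> where y:
    "\<forall>i\<in>{1..n}. x i = \<beta> * (inflow n \<xi> m i + (\<Sum>j\<in>{1..n}. y j i)) + \<delta> i"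
    "\<forall>i\<in>{1..n}. (\<Sum>j\<in>{1..n}. y i j) = x i - m i"
    "\<forall>i\<in>{1..n}. 0 \<le> \<delta> i \<and> (\<forall>j\<in>{1..n}. 0 \<le> y i j)"
    using vehicle_flow_exists[OF assms(1-3), of m \<xi>] bounds unfolding x_def by blast
  obtain r where r:
    "\<forall>i\<in>{1..n}. z i = inflow n \<xi> u i + (\<Sum>j\<in>{1..n}. r j i)"
    "\<forall>i\<in>{1..n}. (\<Sum>j\<in>{1..n}. r i j) = z i - u i"
    "\<forall>i\<in>{1..n}. \<forall>j\<in>{1..n}. 0 \<le> r i j"
    using rebalancing_flow_exists[OF assms(1), of u \<xi>] unfolding z_def by blast
  have inflow_served: "inflow n \<xi> (\<lambda>j. min (x j) (demand (p j))) i = inflow n \<xi> m i"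
    and inflow_unserved: "inflow n \<xi> (\<lambda>j. max (demand (p j) - x j) 0) i = inflow n \<xi> u i" for i
    using served unserved by (auto intro: inflow_cong)
  have feasible: "feasible_P4 n \<xi> \<beta> p \<delta> x y z r"
    unfolding feasible_P4_def
  proof (intro ballI conjI)
    fix i assume i: "i \<in> {1..n}"
    have "0 \<le> u i" "u i \<le> z i"
      using bounds[OF i] unfolding u_def z_def by auto
    then show "0 \<le> z i" by linarith
    show "0 \<le> x i" "0 \<le> p i"
      using bounds[OF i] unfolding p_def by auto
    show "x i = \<beta> * ((\<Sum>j\<in>{1..n}. alpha n \<xi> j i * min (x j) (demand (p j))) + (\<Sum>j\<in>{1..n}. y j i)) + \<delta> i"
      using y(1) i inflow_served[of i] unfolding inflow_def by simp
    show "z i = (\<Sum>j\<in>{1..n}. alpha n \<xi> j i * max (demand (p j) - x j) 0) + (\<Sum>j\<in>{1..n}. r j i)"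
      using r(1) i inflow_unserved[of i] unfolding inflow_def by simp
    show "(\<Sum>j\<in>{1..n}. y i j) = max (x i - demand (p i)) 0"
      using y(2) i excess[OF i] by simp
    show "(\<Sum>j\<in>{1..n}. r i j) = z i - max (demand (p i) - x i) 0"
      using r(2) i unserved[OF i] by simp
    show "0 \<le> \<delta> i" "0 \<le> demand (p i)"
      using y(3) i demand_bounds by auto
    show "0 \<le> y i j" "0 \<le> r i j" if "j \<in> {1..n}" for j
      using y(3) r(3) i that by auto
  qed
  moreover have "obj_P4 n \<omega> s p \<delta> z = reduced_obj n \<xi> \<beta> \<omega> s d m"
    by (rule obj_P4_eq_reduced_obj[OF assms(1,2) feasible])
      (use bounds in \<open>force simp: p_def x_def z_def u_def[abs_def]\<close>)
  ultimately show ?thesis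
    using that unfolding z_def u_def by blast
qed

lemma optval_mixed_eq_obj:
  assumes "optimal_P4 n \<xi> \<beta> \<omega> s p \<delta> x y z r"
  shows "optval_mixed n \<xi> \<beta> \<omega> s = obj_P4 n \<omega> s p \<delta> z"
  unfolding optval_mixed_def
proof (rule cSup_eq_maximum)
  show "obj_P4 n \<omega> s p \<delta> z \<in> {obj_P4 n \<omega> s p \<delta> z |p \<delta> x y z r. feasible_P4 n \<xi> \<beta> p \<delta> x y z r}"
    using assms unfolding optimal_P4_def by blast
  show "v \<le> obj_P4 n \<omega> s p \<delta> z"
    if "v \<in> {obj_P4 n \<omega> s p \<delta> z |p \<delta> x y z r. feasible_P4 n \<xi> \<beta> p \<delta> x y z r}" for v
    using assms that unfolding optimal_P4_def by blast
qed

lemma obj_le_optval_human: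
  assumes "optimal_P4 n \<xi> \<beta> \<omega> s p \<delta> x y z r"
    and "feasible_P4 n \<xi> \<beta> p' \<delta>' x' y' z' r'" "\<forall>i\<in>{1..n}. z' i = 0"
  shows "obj_P4 n \<omega> s p' \<delta>' z' \<le> optval_human n \<xi> \<beta> \<omega> s"
  unfolding optval_human_def
proof (rule cSup_upper)
  show "bdd_above {obj_P4 n \<omega> s p \<delta> z |p \<delta> x y z r.
      feasible_P4 n \<xi> \<beta> p \<delta> x y z r \<and> (\<forall>i\<in>{1..n}. z i = 0)}"
    using assms(1) unfolding optimal_P4_def by (intro bdd_aboveI[of _ "obj_P4 n \<omega> s p \<delta> z"]) blast
  show "obj_P4 n \<omega> s p' \<delta>' z' \<in> {obj_P4 n \<omega> s p \<delta> z |p \<delta> x y z r.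
      feasible_P4 n \<xi> \<beta> p \<delta> x y z r \<and> (\<forall>i\<in>{1..n}. z i = 0)}"
    using assms(2,3) by blast
qed

lemma reduced_obj_le_optimum:
  assumes "n \<ge> 2" "0 \<le> \<beta>" "\<beta> \<le> 1" "optimal_P4 n \<xi> \<beta> \<omega> s p \<delta> x y z r"
    and "reduced_feasible n \<xi> \<beta> d m"
  shows "reduced_obj n \<xi> \<beta> \<omega> s d m \<le> obj_P4 n \<omega> s p \<delta> z"
proof -
  obtain p' \<delta>' x' y' z' r' where "feasible_P4 n \<xi> \<beta> p' \<delta>' x' y' z' r'"
    "obj_P4 n \<omega> s p' \<delta>' z' = reduced_obj n \<xi> \<beta> \<omega> s d m"
    using reduced_point_realizable[OF assms(1-3,5)] .
  then show ?thesis
    using assms(4) unfolding optimal_P4_def by metis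
qed

lemma full_service_le_optval_human:
  assumes "n \<ge> 2" "0 \<le> \<beta>" "\<beta> \<le> 1" "optimal_P4 n \<xi> \<beta> \<omega> s p \<delta> x y z r"
    and "\<forall>i\<in>{1..n}. 0 \<le> d i \<and> d i \<le> 1"
  shows "reduced_obj n \<xi> \<beta> \<omega> s d d \<le> optval_human n \<xi> \<beta> \<omega> s"
proof -
  have "reduced_feasible n \<xi> \<beta> d d"
    using assms(5) unfolding reduced_feasible_def by auto
  then obtain p' \<delta>' x' y' z' r' where feasible: "feasible_P4 n \<xi> \<beta> p' \<delta>' x' y' z' r'"
    and obj: "obj_P4 n \<omega> s p' \<delta>' z' = reduced_obj n \<xi> \<beta> \<omega> s d d"
    and z: "\<forall>i\<in>{1..n}. z' i = max (d i - d i) (inflow n \<xi> (\<lambda>j. d j - d j) i)"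
    using reduced_point_realizable[OF assms(1-3)] by blast
  have "inflow n \<xi> (\<lambda>j. d j - d j) i = 0" for i
    unfolding inflow_def by simp
  then have "\<forall>i\<in>{1..n}. z' i = 0"
    using z by simp
  then show ?thesis
    using obj_le_optval_human[OF assms(4) feasible] obj by simp
qed

lemma optimal_P4_reduced_optimum:
  assumes "n \<ge> 2" "0 \<le> \<beta>" "\<beta> \<le> 1" "0 \<le> \<omega>" "0 \<le> s" "optimal_P4 n \<xi> \<beta> \<omega> s p \<delta> x y z r"
  defines "d \<equiv> \<lambda>i. demand (p i)" and "m \<equiv> \<lambda>i. min (x i) (demand (p i))"
  shows "reduced_feasible n \<xi> \<beta> d m"
    and "optval_mixed n \<xi> \<beta> \<omega> s = reduced_obj n \<xi> \<beta> \<omega> s d m"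
    and "\<And>d' m'. reduced_feasible n \<xi> \<beta> d' m' \<Longrightarrow>
      reduced_obj n \<xi> \<beta> \<omega> s d' m' \<le> reduced_obj n \<xi> \<beta> \<omega> s d m"
proof -
  interpret feasible_point n \<xi> \<beta> p \<delta> x y z r
    using assms(1,2,6) unfolding optimal_P4_def by unfold_locales auto
  show red: "reduced_feasible n \<xi> \<beta> d m"
    unfolding d_def m_def by (rule reduced_feasible_served)
  have "obj_P4 n \<omega> s p \<delta> z = reduced_obj n \<xi> \<beta> \<omega> s d m"
    using obj_le_reduced_obj[OF assms(4,3,5)] reduced_obj_le_optimum[OF assms(1-3,6) red]
    unfolding d_def m_def by (rule antisym)
  then show "optval_mixed n \<xi> \<beta> \<omega> s = reduced_obj n \<xi> \<beta> \<omega> s d m"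
    using optval_mixed_eq_obj[OF assms(6)] by simp
  show "reduced_obj n \<xi> \<beta> \<omega> s d' m' \<le> reduced_obj n \<xi> \<beta> \<omega> s d m"
    if "reduced_feasible n \<xi> \<beta> d' m'" for d' m'
    using reduced_obj_le_optimum[OF assms(1-3,6) that] \<open>obj_P4 n \<omega> s p \<delta> z = _\<close> by simp
qed

section \<open>The star network\<close>

text \<open>For \<open>\<xi> = 0\<close> the reduced objective splits into a hub term and one term per leaf.  A leaf
  receives the stock \<open>c = \<beta> * m 1 / (n - 1)\<close> pushed from the hub and the share
  \<open>g = (d 1 - m 1) / (n - 1)\<close> of the hub's autonomously served demand.  When the leaves' unserved
  demand exceeds the hub's, the rebalancing at the hub is the sum of the leaf terms \<open>s * (d - m)\<close>.\<close>

definition leaf_profit :: "real \<Rightarrow> real \<Rightarrow> real \<Rightarrow> real \<Rightarrow> real \<Rightarrow> real \<Rightarrow> real" where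
  "leaf_profit k s c g d m = d * (1 - d) - k * max m c - s * (d - m) - s * max (d - m) g"

lemma leaf_profit_antimono_stock:
  "c' \<le> c \<Longrightarrow> 0 \<le> k \<Longrightarrow> leaf_profit k s c g d m \<le> leaf_profit k s c' g d m"
  unfolding leaf_profit_def by (simp add: mult_left_mono)

lemma leaf_profit_deficit:
  assumes "0 \<le> s" "0 \<le> g" "m \<le> d"
  shows "leaf_profit k s c 0 d m - s * g \<le> leaf_profit k s c g d m"
    and "g \<le> d - m \<Longrightarrow> leaf_profit k s c g d m = leaf_profit k s c 0 d m"
proof -
  have "max (d - m) g \<le> max (d - m) 0 + g" using assms(2,3) by simp
  then have "s * max (d - m) g \<le> s * (max (d - m) 0 + g)" using assms(1) by (rule mult_left_mono)
  then show "leaf_profit k s c 0 d m - s * g \<le> leaf_profit k s c g d m"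
    unfolding leaf_profit_def by (simp add: algebra_simps)
  show "g \<le> d - m \<Longrightarrow> leaf_profit k s c g d m = leaf_profit k s c 0 d m"
    unfolding leaf_profit_def using assms(2) by simp
qed

lemma reduced_obj_star:
  assumes "n \<ge> 2" "d 1 - m 1 \<le> (\<Sum>l\<in>{2..n}. d l - m l)"
  shows "reduced_obj n 0 \<beta> \<omega> s d m = d 1 * (1 - d 1) - \<omega> * (1 - \<beta>) * max (m 1) (\<beta> * (\<Sum>l\<in>{2..n}. m l))
    + (\<Sum>l\<in>{2..n}. leaf_profit (\<omega> * (1 - \<beta>)) s (\<beta> * m 1 / (real n - 1)) ((d 1 - m 1) / (real n - 1)) (d l) (m l))"
proof -
  have n1: "n \<ge> 1" using assms(1) by simp
  have fleet: "min_fleet n 0 \<beta> m = max (m 1) (\<beta> * (\<Sum>l\<in>{2..n}. m l))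
      + (\<Sum>l\<in>{2..n}. max (m l) (\<beta> * m 1 / (real n - 1)))"
    unfolding min_fleet_def sum_split_hub[OF n1] inflow_star_hub[OF assms(1)]
    using inflow_star_leaf[OF assms(1)] by (auto intro: sum.cong)
  have rebalancing: "min_rebalancing n 0 (\<lambda>i. d i - m i) = (\<Sum>l\<in>{2..n}. d l - m l)
      + (\<Sum>l\<in>{2..n}. max (d l - m l) ((d 1 - m 1) / (real n - 1)))"
    unfolding min_rebalancing_def sum_split_hub[OF n1] inflow_star_hub[OF assms(1)]
    using inflow_star_leaf[OF assms(1)] assms(2) by (auto intro: sum.cong)
  show ?thesis
    unfolding reduced_obj_def fleet rebalancing sum_split_hub[OF n1] leaf_profit_def
    by (simp add: sum.distrib sum_subtractf sum_distrib_left algebra_simps)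
qed

lemma reduced_feasible_star:
  assumes "n \<ge> 2"
  shows "reduced_feasible n 0 \<beta> d m \<longleftrightarrow> (\<forall>i\<in>{1..n}. 0 \<le> m i \<and> m i \<le> d i \<and> d i \<le> 1)
     \<and> (m 1 < d 1 \<longrightarrow> \<beta> * (\<Sum>l\<in>{2..n}. m l) \<le> m 1)
     \<and> (\<forall>l\<in>{2..n}. m l < d l \<longrightarrow> \<beta> * m 1 / (real n - 1) \<le> m l)"
proof -
  have "{1..n} = insert 1 {2..n}" using assms by auto
  then show ?thesis
    unfolding reduced_feasible_def using inflow_star_hub[OF assms, of m] inflow_star_leaf[OF assms, of _ m]
    by auto
qed

lemma reduced_feasible_starI:
  assumes "n \<ge> 2" "0 \<le> m 1" "m 1 \<le> d 1" "d 1 \<le> 1"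
    and "\<And>l. l \<in> {2..n} \<Longrightarrow> 0 \<le> m l \<and> m l \<le> d l \<and> d l \<le> 1"
    and "m 1 < d 1 \<Longrightarrow> \<beta> * (\<Sum>l\<in>{2..n}. m l) \<le> m 1"
    and "\<And>l. l \<in> {2..n} \<Longrightarrow> m l < d l \<Longrightarrow> \<beta> * m 1 / (real n - 1) \<le> m l"
  shows "reduced_feasible n 0 \<beta> d m"
proof -
  have "{1..n} = insert 1 {2..n}" using assms(1) by auto
  then show ?thesis
    unfolding reduced_feasible_star[OF assms(1)] using assms(2-7) by auto
qed

lemma star_full_service_dominates:
  assumes "n \<ge> 2" "0 \<le> \<beta>" "\<beta> \<le> 1" "0 \<le> \<omega>" "\<omega> * (1 - \<beta>) * (1 + \<beta>) \<le> 2 * s"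
    and "m 1 = d 1" "\<forall>l\<in>{2..n}. m l \<le> d l"
  shows "reduced_obj n 0 \<beta> \<omega> s d m \<le> reduced_obj n 0 \<beta> \<omega> s d d"
proof -
  define k where "k = \<omega> * (1 - \<beta>)"
  define c where "c = \<beta> * d 1 / (real n - 1)"
  define W where "W = (\<Sum>l\<in>{2..n}. d l - m l)"
  have k: "0 \<le> k" unfolding k_def using assms(3,4) by simp
  have W: "0 \<le> W" unfolding W_def using assms(7) by (intro sum_nonneg) auto
  have "\<beta> * (\<Sum>l\<in>{2..n}. d l) = \<beta> * (\<Sum>l\<in>{2..n}. m l) + \<beta> * W"
    unfolding W_def sum_subtractf by (simp add: algebra_simps)
  moreover have "0 \<le> \<beta> * W"
    using W assms(2) by simp
  ultimately have hub: "max (d 1) (\<beta> * (\<Sum>l\<in>{2..n}. d l)) \<le> max (d 1) (\<beta> * (\<Sum>l\<in>{2..n}. m l)) + \<beta> * W"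
    unfolding max_def by auto
  have leaf: "(2 * s - k) * (d l - m l) \<le> leaf_profit k s c 0 (d l) (d l) - leaf_profit k s c 0 (d l) (m l)"
    if "l \<in> {2..n}" for l
  proof -
    have "m l \<le> d l" using assms(7) that by blast
    then have "max (d l) c - max (m l) c \<le> d l - m l" by (simp add: max_def)
    then have "k * (max (d l) c - max (m l) c) \<le> k * (d l - m l)" using k by (rule mult_left_mono)
    then show ?thesis using assms(7) that unfolding leaf_profit_def by (simp add: algebra_simps)
  qed
  have "(2 * s - k) * W \<le> (\<Sum>l\<in>{2..n}. leaf_profit k s c 0 (d l) (d l)) - (\<Sum>l\<in>{2..n}. leaf_profit k s c 0 (d l) (m l))"
    unfolding W_def sum_distrib_left sum_subtractf[symmetric] using leaf by (rule sum_mono)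
  moreover have "k * max (d 1) (\<beta> * (\<Sum>l\<in>{2..n}. d l)) \<le> k * max (d 1) (\<beta> * (\<Sum>l\<in>{2..n}. m l)) + k * \<beta> * W"
    using mult_left_mono[OF hub k] by (simp add: algebra_simps)
  moreover have "k * \<beta> * W \<le> (2 * s - k) * W"
    using mult_right_mono[OF _ W, of "k * (1 + \<beta>)" "2 * s"] assms(5) unfolding k_def by (simp add: algebra_simps)
  moreover have "d 1 - m 1 \<le> (\<Sum>l\<in>{2..n}. d l - m l)" "d 1 - d 1 \<le> (\<Sum>l\<in>{2..n}. d l - d l)"
    using assms(6) W unfolding W_def by simp_all
  note star = reduced_obj_star[OF assms(1) this(1)] reduced_obj_star[OF assms(1) this(2)]
  ultimately show ?thesis
    unfolding star assms(6) k_def[symmetric] c_def[symmetric] W_def by simp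
qed

text \<open>A leaf under the perturbation of a tight hub: a leaf with excess stock gives up \<open>\<eta>\<close>, a fully
  served leaf at the inflow level absorbs the extra demand \<open>g\<close>, all other leaves stay.  Its profit
  plus its share \<open>k * \<beta> * (m - m')\<close> of the hub's fleet saving does not decrease, and strictly
  increases at a leaf with excess stock.\<close>

lemma leaf_profit_tight_perturbation:
  fixes k s \<beta> c g \<eta> d m :: real
  assumes "0 \<le> \<beta>" "\<beta> \<le> 1" "0 \<le> s" "2 * s < k * (1 + \<beta>)"
    and "0 \<le> c" "0 \<le> m" "m \<le> d" "d \<le> 1" "m < d \<Longrightarrow> c \<le> m"
    and "0 < g" "g \<le> \<eta>" "\<eta> \<le> 1 - 2 * c - 2 * s"
    and "m \<noteq> c \<Longrightarrow> \<eta> \<le> \<bar>m - c\<bar>" "m = c \<Longrightarrow> m < d \<Longrightarrow> \<eta> \<le> d - m"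
    and "m < c \<Longrightarrow> s \<le> k * \<beta>"
  defines "d' \<equiv> if m = c \<and> d = m then d + g else d" and "m' \<equiv> if c < m then m - \<eta> else m"
  shows "0 \<le> m'" "m' \<le> d'" "d' \<le> 1" "m' < d' \<Longrightarrow> c - \<beta> * g \<le> m'" "d \<le> d'"
    and "leaf_profit k s c 0 d m \<le> leaf_profit k s (c - \<beta> * g) g d' m' + k * \<beta> * (m - m')"
    and "c < m \<Longrightarrow> leaf_profit k s c 0 d m < leaf_profit k s (c - \<beta> * g) g d' m' + k * \<beta> * (m - m')"
proof -
  have \<beta>g: "0 \<le> \<beta> * g" "\<beta> * g \<le> g"
    using assms(1,2,10) by (simp_all add: mult_left_le_one_le)
  consider (excess) "c < m" | (short) "m < c" | (exact) "m = c" "d = m" | (idle) "m = c" "m < d"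
    using assms(7) by linarith
  then have "0 \<le> m' \<and> m' \<le> d' \<and> d' \<le> 1 \<and> (m' < d' \<longrightarrow> c - \<beta> * g \<le> m') \<and> d \<le> d'
    \<and> leaf_profit k s c 0 d m + (if c < m then \<eta> * (k * (1 + \<beta>) - 2 * s) else 0)
       \<le> leaf_profit k s (c - \<beta> * g) g d' m' + k * \<beta> * (m - m')"
  proof cases
    case excess
    then have "\<eta> \<le> m - c" using assms(13) by simp
    then have "max (m - \<eta>) (c - \<beta> * g) = m - \<eta>" "max (d - m + \<eta>) g = d - m + \<eta>"
      using \<beta>g assms(7,11) by simp_all
    then show ?thesis
      using excess assms \<beta>g unfolding d'_def m'_def leaf_profit_def by (simp add: algebra_simps)
  next
    case short
    have "d = m" using short assms(7,9) by force
    moreover have "\<beta> * g \<le> c - m" using short assms(11,13) \<beta>g by simp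
    moreover have "0 \<le> g * (k * \<beta> - s)" using short assms(10,15) by simp
    ultimately show ?thesis
      using short assms \<beta>g unfolding d'_def m'_def leaf_profit_def by (simp add: algebra_simps)
  next
    case exact
    have "0 \<le> g * (1 - 2 * c - 2 * s - g)"
      using assms(10-12) by (intro mult_nonneg_nonneg) auto
    then show ?thesis
      using exact assms \<beta>g unfolding d'_def m'_def leaf_profit_def by (simp add: algebra_simps)
  next
    case idle
    then have "g \<le> d - m" using assms(11,14) by simp
    then show ?thesis
      using idle assms \<beta>g unfolding d'_def m'_def leaf_profit_def by (simp add: algebra_simps)
  qed
  moreover have "c < m \<Longrightarrow> 0 < \<eta> * (k * (1 + \<beta>) - 2 * s)"
    using assms(4,10,11) by simp
  ultimately show "0 \<le> m'" "m' \<le> d'" "d' \<le> 1" "m' < d' \<Longrightarrow> c - \<beta> * g \<le> m'" "d \<le> d'"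
    "leaf_profit k s c 0 d m \<le> leaf_profit k s (c - \<beta> * g) g d' m' + k * \<beta> * (m - m')"
    "c < m \<Longrightarrow> leaf_profit k s c 0 d m < leaf_profit k s (c - \<beta> * g) g d' m' + k * \<beta> * (m - m')"
    by (auto split: if_splits)
qed



section \<open>Optima of the star with a fully served hub\<close>

locale star_optimum =
  fixes n :: nat and \<beta> \<omega> s :: real and d m :: "nat \<Rightarrow> real"
  assumes n3: "n \<ge> 3" and beta: "0 < \<beta>" "\<beta> < 1" and omega: "0 < \<omega>" and s_nonneg: "0 \<le> s"
    and feasible: "reduced_feasible n 0 \<beta> d m"
    and optimal: "\<And>d' m'. reduced_feasible n 0 \<beta> d' m' \<Longrightarrow>
      reduced_obj n 0 \<beta> \<omega> s d' m' \<le> reduced_obj n 0 \<beta> \<omega> s d m"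
    and hub_served: "m 1 = d 1"
begin

lemma n2: "n \<ge> 2"
  using n3 by simp

lemma served_bounds: "i \<in> {1..n} \<Longrightarrow> 0 \<le> m i \<and> m i \<le> d i \<and> d i \<le> 1"
  using feasible unfolding reduced_feasible_star[OF n2] by blast

lemma hub_bounds: "0 \<le> d 1" "d 1 \<le> 1"
  using served_bounds[of 1] n2 by auto

lemma leaf_bounds:
  assumes "l \<in> {2..n}"
  shows "0 \<le> m l" "m l \<le> d l" "d l \<le> 1"
  using served_bounds[of l] assms by auto

lemma leaf_stock_nonneg: "0 \<le> (\<Sum>l\<in>{2..n}. m l)"
  using leaf_bounds by (auto intro: sum_nonneg)

lemma unserved_leaf_stock: "l \<in> {2..n} \<Longrightarrow> m l < d l \<Longrightarrow> \<beta> * d 1 / (real n - 1) \<le> m l"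
  using feasible hub_served unfolding reduced_feasible_star[OF n2] by auto

lemma optimal_value:
  "reduced_obj n 0 \<beta> \<omega> s d m = d 1 * (1 - d 1) - \<omega> * (1 - \<beta>) * max (d 1) (\<beta> * (\<Sum>l\<in>{2..n}. m l))
    + (\<Sum>l\<in>{2..n}. leaf_profit (\<omega> * (1 - \<beta>)) s (\<beta> * d 1 / (real n - 1)) 0 (d l) (m l))"
proof -
  have "d 1 - m 1 \<le> (\<Sum>l\<in>{2..n}. d l - m l)"
    using served_bounds hub_served by (auto intro: sum_nonneg)
  note star = reduced_obj_star[OF n2 this]
  show ?thesis
    unfolding star hub_served by simp
qed

lemma single_leaf_change:
  assumes "j \<in> {2..n}" "reduced_feasible n 0 \<beta> d' m'" "d' 1 = d 1" "m' 1 = d 1"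
    and "\<And>l. l \<in> {2..n} \<Longrightarrow> l \<noteq> j \<Longrightarrow> d' l = d l \<and> m' l = m l"
  shows "leaf_profit (\<omega> * (1 - \<beta>)) s (\<beta> * d 1 / (real n - 1)) 0 (d' j) (m' j)
      - leaf_profit (\<omega> * (1 - \<beta>)) s (\<beta> * d 1 / (real n - 1)) 0 (d j) (m j)
    \<le> \<omega> * (1 - \<beta>) * (max (d 1) (\<beta> * (\<Sum>l\<in>{2..n}. m' l)) - max (d 1) (\<beta> * (\<Sum>l\<in>{2..n}. m l)))"
proof -
  let ?f = "\<lambda>a b. leaf_profit (\<omega> * (1 - \<beta>)) s (\<beta> * d 1 / (real n - 1)) 0 a b"
  have "0 \<le> (\<Sum>l\<in>{2..n}. d' l - m' l)" "0 \<le> (\<Sum>l\<in>{2..n}. d l - m l)"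
    using assms(2) served_bounds unfolding reduced_feasible_star[OF n2] by (auto intro!: sum_nonneg)
  then have "d' 1 - m' 1 \<le> (\<Sum>l\<in>{2..n}. d' l - m' l)" "d 1 - m 1 \<le> (\<Sum>l\<in>{2..n}. d l - m l)"
    using assms(3,4) hub_served by simp_all
  note star = reduced_obj_star[OF n2 this(1)] reduced_obj_star[OF n2 this(2)]
  have "(\<Sum>l\<in>{2..n}. ?f (d' l) (m' l)) = (\<Sum>l\<in>{2..n}. ?f (d l) (m l)) - ?f (d j) (m j) + ?f (d' j) (m' j)"
    using assms(1,5) by (intro sum_change_one) auto
  then show ?thesis
    using optimal[OF assms(2)] unfolding star assms(3,4) hub_served by (simp add: algebra_simps)
qed

text \<open>The first-order conditions below come from small feasible changes of the optimum.  Raising the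
  price at an unserved leaf saves autonomous service twice, at the leaf and at the hub.\<close>

lemma unserved_leaf_demand_bound:
  assumes j: "j \<in> {2..n}" "m j < d j"
  shows "2 * s \<le> 1 - 2 * d j"
proof -
  have gain: "e * (2 * s - (1 - 2 * d j) - e) \<le> 0" if e: "0 < e" "e \<le> d j - m j" for e
  proof -
    define d' where "d' = d(j := d j - e)"
    have j1: "j \<noteq> 1" and jI: "j \<in> {1..n}" using j by auto
    have "reduced_feasible n 0 \<beta> d' m"
    proof (rule reduced_feasible_starI[OF n2])
      fix l assume l: "l \<in> {2..n}"
      show "0 \<le> m l \<and> m l \<le> d' l \<and> d' l \<le> 1"
        using leaf_bounds[OF l] e by (auto simp: d'_def)
      show "m l < d' l \<Longrightarrow> \<beta> * m 1 / (real n - 1) \<le> m l"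
        using unserved_leaf_stock[OF l] e hub_served by (auto simp: d'_def split: if_splits)
    qed (use hub_bounds hub_served j1 in \<open>auto simp: d'_def\<close>)
    then have "leaf_profit (\<omega> * (1 - \<beta>)) s (\<beta> * d 1 / (real n - 1)) 0 (d' j) (m j)
        - leaf_profit (\<omega> * (1 - \<beta>)) s (\<beta> * d 1 / (real n - 1)) 0 (d j) (m j) \<le> 0"
      using single_leaf_change[OF j(1), of d' m] j1 hub_served unfolding d'_def by simp
    moreover have "max (d j - e - m j) 0 = d j - e - m j" "max (d j - m j) 0 = d j - m j"
      using e by simp_all
    ultimately show ?thesis
      unfolding leaf_profit_def d'_def by (simp add: algebra_simps)
  qed
  have "2 * s - (1 - 2 * d j) \<le> 0"
    by (rule first_order_nonpos[of "d j - m j", OF _ gain]) (use j in simp_all)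
  then show ?thesis by simp
qed

text \<open>Lowering the hub price adds autonomously served demand at the hub, which costs rebalancing
  at every leaf except one that is already short of vehicles.\<close>

lemma hub_demand_raise_bound:
  assumes j: "j \<in> {2..n}" "m j < d j" and hub: "\<beta> * (\<Sum>l\<in>{2..n}. m l) \<le> d 1" "d 1 < 1"
  shows "1 - 2 * d 1 \<le> s * (real n - 2) / (real n - 1)"
proof -
  define k where "k = \<omega> * (1 - \<beta>)"
  define c where "c = \<beta> * d 1 / (real n - 1)"
  have L: "real n - 1 > 0" "real (card {2..n}) = real n - 1" using n3 by simp_all
  have gain: "e * (1 - 2 * d 1 - s * (real n - 2) / (real n - 1) - e) \<le> 0"
    if e: "0 < e" "e \<le> min (d j - m j) (1 - d 1)" for e
  proof -
    define d' where "d' = d(1 := d 1 + e)"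
    define g where "g = e / (real n - 1)"
    have g: "0 \<le> g" "g \<le> e" using e L unfolding g_def by (simp_all add: divide_le_eq)
    have d'1: "d' 1 = d 1 + e" and d'l: "\<And>l. l \<in> {2..n} \<Longrightarrow> d' l = d l"
      unfolding d'_def by auto
    have "reduced_feasible n 0 \<beta> d' m"
      by (rule reduced_feasible_starI[OF n2])
        (use hub_bounds leaf_bounds unserved_leaf_stock hub_served hub e d'l d'1 in auto)
    then have le: "reduced_obj n 0 \<beta> \<omega> s d' m \<le> reduced_obj n 0 \<beta> \<omega> s d m"
      by (rule optimal)
    have "d j - m j \<le> (\<Sum>l\<in>{2..n}. d l - m l)"
      using served_bounds j(1) by (intro member_le_sum) auto
    then have "d' 1 - m 1 \<le> (\<Sum>l\<in>{2..n}. d' l - m l)"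
      using e hub_served d'l unfolding d'1 by simp
    note star = reduced_obj_star[OF n2 this]
    have "(\<Sum>l\<in>{2..n}. leaf_profit k s c 0 (d l) (m l)) - (\<Sum>l\<in>{2..n}. if l = j then 0 else s * g)
        \<le> (\<Sum>l\<in>{2..n}. leaf_profit k s c g (d l) (m l))"
      unfolding sum_subtractf[symmetric]
      using leaf_profit_deficit[OF s_nonneg g(1)] served_bounds g(2) e j by (intro sum_mono) auto
    also have "(\<Sum>l\<in>{2..n}. if l = j then 0 else s * g) = (real n - 2) * (s * g)"
      using sum_change_one[of "{2..n}" j "\<lambda>_. s * g" "\<lambda>l. if l = j then 0 else s * g"] j L(2)
      by (simp add: algebra_simps)
    also have "(\<Sum>l\<in>{2..n}. leaf_profit k s c g (d l) (m l)) = (\<Sum>l\<in>{2..n}. leaf_profit k s c g (d' l) (m l))"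
      using d'l by simp
    finally show ?thesis
      using le unfolding star optimal_value d'1 hub_served
      by (simp add: g_def k_def c_def algebra_simps)
  qed
  have "1 - 2 * d 1 - s * (real n - 2) / (real n - 1) \<le> 0"
    by (rule first_order_nonpos[of "min (d j - m j) (1 - d 1)", OF _ gain]) (use j hub in simp_all)
  then show ?thesis by simp
qed

text \<open>A hub whose stock exceeds its inflow can lower price and stock together.\<close>

lemma hub_slack_cost_bound:
  assumes slack: "\<beta> * (\<Sum>l\<in>{2..n}. m l) < d 1"
  shows "\<omega> * (1 - \<beta>) \<le> 1 - 2 * d 1"
proof -
  define k where "k = \<omega> * (1 - \<beta>)"
  define M where "M = (\<Sum>l\<in>{2..n}. m l)"
  have k: "0 \<le> k" unfolding k_def using omega beta by simp
  have M: "0 \<le> \<beta> * M" unfolding M_def using leaf_stock_nonneg beta by simp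
  have gain: "e * (k - (1 - 2 * d 1) - e) \<le> 0" if e: "0 < e" "e \<le> d 1 - \<beta> * M" for e
  proof -
    define d' where "d' = d(1 := d 1 - e)"
    define m' where "m' = m(1 := d 1 - e)"
    have d'1: "d' 1 = d 1 - e" and m'1: "m' 1 = d 1 - e"
      and leaves: "\<And>l. l \<in> {2..n} \<Longrightarrow> d' l = d l \<and> m' l = m l"
      unfolding d'_def m'_def by auto
    have stock: "\<beta> * (d 1 - e) / (real n - 1) \<le> \<beta> * d 1 / (real n - 1)"
      using e beta n3 by (simp add: divide_right_mono)
    have "reduced_feasible n 0 \<beta> d' m'"
    proof (rule reduced_feasible_starI[OF n2])
      fix l assume l: "l \<in> {2..n}"
      show "0 \<le> m' l \<and> m' l \<le> d' l \<and> d' l \<le> 1"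
        using leaf_bounds[OF l] leaves[OF l] by simp
      show "m' l < d' l \<Longrightarrow> \<beta> * m' 1 / (real n - 1) \<le> m' l"
        using unserved_leaf_stock[OF l] leaves[OF l] stock m'1 by simp
    qed (use hub_bounds M e d'1 m'1 in auto)
    then have le: "reduced_obj n 0 \<beta> \<omega> s d' m' \<le> reduced_obj n 0 \<beta> \<omega> s d m"
      by (rule optimal)
    have "d' 1 - m' 1 \<le> (\<Sum>l\<in>{2..n}. d' l - m' l)"
      using d'1 m'1 leaves leaf_bounds by (auto intro: sum_nonneg)
    note star = reduced_obj_star[OF n2 this]
    have "(\<Sum>l\<in>{2..n}. leaf_profit k s (\<beta> * d 1 / (real n - 1)) 0 (d l) (m l))
        \<le> (\<Sum>l\<in>{2..n}. leaf_profit k s (\<beta> * m' 1 / (real n - 1)) ((d' 1 - m' 1) / (real n - 1)) (d' l) (m' l))"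
      using leaf_profit_antimono_stock[OF stock k] leaves d'1 m'1 by (intro sum_mono) simp
    moreover have "(\<Sum>l\<in>{2..n}. m' l) = M" and "max (d 1 - e) (\<beta> * M) = d 1 - e" "max (d 1) (\<beta> * M) = d 1"
      using leaves e slack unfolding M_def by simp_all
    ultimately show ?thesis
      using le unfolding star optimal_value d'1 m'1 k_def[symmetric] M_def[symmetric]
      by (simp add: algebra_simps)
  qed
  have "k - (1 - 2 * d 1) \<le> 0"
    by (rule first_order_nonpos[of "d 1 - \<beta> * M", OF _ gain]) (use slack in \<open>simp_all add: M_def\<close>)
  then show ?thesis unfolding k_def by simp
qed

text \<open>At a tight hub, a leaf stocked below the inflow level can sell more if the hub stock grows.\<close>

lemma short_leaf_demand_bound:
  assumes tight: "d 1 = \<beta> * (\<Sum>l\<in>{2..n}. m l)"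
    and l: "l \<in> {2..n}" "m l < \<beta> * d 1 / (real n - 1)"
  shows "1 - 2 * d l \<le> \<omega> * (1 - \<beta>) * \<beta>"
proof -
  define c where "c = \<beta> * d 1 / (real n - 1)"
  have dl: "d l = m l" using leaf_bounds[OF l(1)] unserved_leaf_stock[OF l(1)] l(2) by force
  have "\<beta> * d 1 \<le> 1" using hub_bounds beta by (simp add: mult_le_one)
  then have c1: "c \<le> 1"
    using n3 unfolding c_def by (simp add: divide_le_eq)
  have gain: "e * (1 - 2 * d l - \<omega> * (1 - \<beta>) * \<beta> - e) \<le> 0" if e: "0 < e" "e \<le> c - m l" for e
  proof -
    define d' where "d' = d(l := d l + e)"
    define m' where "m' = m(l := m l + e)"
    have l1: "l \<noteq> 1" using l by auto
    have "reduced_feasible n 0 \<beta> d' m'"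
    proof (rule reduced_feasible_starI[OF n2])
      fix i assume i: "i \<in> {2..n}"
      show "0 \<le> m' i \<and> m' i \<le> d' i \<and> d' i \<le> 1"
        using leaf_bounds[OF i] dl e c1 unfolding d'_def m'_def by auto
      show "m' i < d' i \<Longrightarrow> \<beta> * m' 1 / (real n - 1) \<le> m' i"
        using unserved_leaf_stock[OF i] dl hub_served l1 unfolding d'_def m'_def by auto
    qed (use hub_bounds hub_served l1 in \<open>auto simp: d'_def m'_def\<close>)
    then have "leaf_profit (\<omega> * (1 - \<beta>)) s c 0 (d' l) (m' l) - leaf_profit (\<omega> * (1 - \<beta>)) s c 0 (d l) (m l)
        \<le> \<omega> * (1 - \<beta>) * (max (d 1) (\<beta> * (\<Sum>i\<in>{2..n}. m' i)) - max (d 1) (\<beta> * (\<Sum>i\<in>{2..n}. m i)))"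
      unfolding c_def by (rule single_leaf_change[OF l(1)]) (use l1 hub_served in \<open>auto simp: d'_def m'_def\<close>)
    moreover have "(\<Sum>i\<in>{2..n}. m' i) = (\<Sum>i\<in>{2..n}. m i) - m l + (m l + e)"
      using sum_change_one[of "{2..n}" l m m'] l unfolding m'_def by simp
    moreover have "max (m l + e) c = c" "max (m l) c = c"
      using e by simp_all
    ultimately show ?thesis
      using tight e beta dl unfolding d'_def m'_def leaf_profit_def by (simp add: algebra_simps)
  qed
  have "1 - 2 * d l - \<omega> * (1 - \<beta>) * \<beta> \<le> 0"
    by (rule first_order_nonpos[of "c - m l", OF _ gain]) (use l in \<open>simp_all add: c_def\<close>)
  then show ?thesis by simp
qed

lemma excess_leaf_exists:
  assumes "d 1 \<le> \<beta> * (\<Sum>l\<in>{2..n}. m l)" "0 < d 1 \<or> d 1 < \<beta> * (\<Sum>l\<in>{2..n}. m l)"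
  obtains l where "l \<in> {2..n}" "\<beta> * d 1 / (real n - 1) < m l"
proof (rule ccontr)
  assume "\<not> thesis"
  then have "\<forall>l\<in>{2..n}. m l \<le> \<beta> * d 1 / (real n - 1)"
    using that by force
  then have "(\<Sum>l\<in>{2..n}. m l) \<le> (\<Sum>l\<in>{2..n}. \<beta> * d 1 / (real n - 1))"
    by (intro sum_mono) auto
  also have "\<dots> = \<beta> * d 1"
    using n3 by simp
  finally have "\<beta> * (\<Sum>l\<in>{2..n}. m l) \<le> \<beta> * (\<beta> * d 1)"
    using beta by simp
  moreover have "\<beta> * \<beta> < 1 * 1"
    using beta by (intro mult_strict_mono) auto
  then have "(\<beta> * \<beta>) * d 1 \<le> 1 * d 1" "0 < d 1 \<Longrightarrow> (\<beta> * \<beta>) * d 1 < 1 * d 1"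
    using hub_bounds by (intro mult_right_mono mult_strict_right_mono; simp)+
  ultimately show False
    using assms by linarith
qed

text \<open>If the leaves' inflow exceeded the hub demand, a leaf with excess stock could give some up:
  this saves fleet cost \<open>\<omega> * (1 - \<beta>) * (1 + \<beta>)\<close> per unit at the leaf and the hub and costs
  \<open>2 * s\<close> per unit of autonomous service.\<close>

lemma leaf_inflow_le_hub_demand:
  assumes small: "2 * s < \<omega> * (1 - \<beta>) * (1 + \<beta>)"
  shows "\<beta> * (\<Sum>l\<in>{2..n}. m l) \<le> d 1"
proof (rule ccontr)
  define k where "k = \<omega> * (1 - \<beta>)"
  define c where "c = \<beta> * d 1 / (real n - 1)"
  define M where "M = (\<Sum>l\<in>{2..n}. m l)"
  assume "\<not> \<beta> * (\<Sum>l\<in>{2..n}. m l) \<le> d 1"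
  then have deficit: "d 1 < \<beta> * M" unfolding M_def by simp
  then obtain l where l: "l \<in> {2..n}" "c < m l"
    using excess_leaf_exists unfolding c_def M_def by force
  define \<eta> where "\<eta> = min (m l - c) (M - d 1 / \<beta>)"
  have "d 1 / \<beta> < M"
    using deficit beta by (simp add: divide_less_eq mult.commute)
  then have \<eta>: "0 < \<eta>" "\<eta> \<le> m l - c"
    using l unfolding \<eta>_def by auto
  have "\<beta> * \<eta> \<le> \<beta> * (M - d 1 / \<beta>)"
    using beta unfolding \<eta>_def by (intro mult_left_mono) auto
  then have hub_deficit: "d 1 \<le> \<beta> * (M - \<eta>)"
    using beta by (simp add: algebra_simps)
  define m' where "m' = m(l := m l - \<eta>)"
  have l1: "l \<noteq> 1" using l by auto
  have "c \<ge> 0" unfolding c_def using beta hub_bounds n3 by simp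
  have "reduced_feasible n 0 \<beta> d m'"
  proof (rule reduced_feasible_starI[OF n2])
    fix i assume i: "i \<in> {2..n}"
    show "0 \<le> m' i \<and> m' i \<le> d i \<and> d i \<le> 1"
      using leaf_bounds[OF i] \<eta> \<open>c \<ge> 0\<close> unfolding m'_def by auto
    show "m' i < d i \<Longrightarrow> \<beta> * m' 1 / (real n - 1) \<le> m' i"
      using unserved_leaf_stock[OF i] \<eta> hub_served l1 unfolding m'_def c_def by auto
  qed (use hub_bounds hub_served l1 in \<open>auto simp: m'_def\<close>)
  then have "leaf_profit k s c 0 (d l) (m' l) - leaf_profit k s c 0 (d l) (m l)
      \<le> k * (max (d 1) (\<beta> * (\<Sum>i\<in>{2..n}. m' i)) - max (d 1) (\<beta> * M))"
    unfolding c_def k_def M_def by (rule single_leaf_change[OF l(1)]) (use l1 hub_served in \<open>auto simp: m'_def\<close>)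
  moreover have "(\<Sum>i\<in>{2..n}. m' i) = M - \<eta>"
    using sum_change_one[of "{2..n}" l m m'] l unfolding m'_def M_def by simp
  moreover have "m' l = m l - \<eta>" "max (m l - \<eta>) c = m l - \<eta>" "max (m l) c = m l"
    "max (d l - (m l - \<eta>)) 0 = d l - m l + \<eta>" "max (d l - m l) 0 = d l - m l"
    using \<eta> l leaf_bounds[OF l(1)] unfolding m'_def by simp_all
  ultimately have "\<eta> * (k * (1 + \<beta>) - 2 * s) \<le> 0"
    using hub_deficit deficit unfolding leaf_profit_def by (simp add: algebra_simps)
  moreover have "0 < \<eta> * (k * (1 + \<beta>) - 2 * s)"
    using \<eta>(1) small unfolding k_def by simp
  ultimately show False by simp
qed

lemma hub_demand_le_leaf_inflow:
  assumes j: "j \<in> {2..n}" "m j < d j" and small: "2 * s < \<omega> * (1 - \<beta>) * (1 + \<beta>)"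
  shows "d 1 \<le> \<beta> * (\<Sum>l\<in>{2..n}. m l)"
proof (rule ccontr)
  assume slack: "\<not> d 1 \<le> \<beta> * (\<Sum>l\<in>{2..n}. m l)"
  have k: "0 < \<omega> * (1 - \<beta>)"
    using omega beta by simp
  then have "\<omega> * (1 - \<beta>) * (1 + \<beta>) < \<omega> * (1 - \<beta>) * 2"
    using beta by (intro mult_strict_left_mono) auto
  then have "s < \<omega> * (1 - \<beta>)"
    using small by simp
  have "\<omega> * (1 - \<beta>) \<le> 1 - 2 * d 1"
    using hub_slack_cost_bound slack by simp
  then have "1 - 2 * d 1 \<le> s * (real n - 2) / (real n - 1)"
    using hub_demand_raise_bound[OF j] slack k by simp
  also have "\<dots> \<le> s"
    using s_nonneg n3 by (simp add: divide_le_eq mult_left_mono)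
  finally show False
    using \<open>\<omega> * (1 - \<beta>) \<le> 1 - 2 * d 1\<close> \<open>s < \<omega> * (1 - \<beta>)\<close> by simp
qed

lemma hub_demand_pos:
  assumes j: "j \<in> {2..n}" "m j < d j" and hub: "\<beta> * (\<Sum>l\<in>{2..n}. m l) \<le> d 1"
  shows "0 < d 1"
proof (rule ccontr)
  assume "\<not> 0 < d 1"
  then have "d 1 = 0" using hub_bounds by simp
  then have "1 \<le> s * (real n - 2) / (real n - 1)"
    using hub_demand_raise_bound[OF j hub] by simp
  also have "\<dots> \<le> s"
    using s_nonneg n3 by (simp add: divide_le_eq mult_left_mono)
  finally show False
    using unserved_leaf_demand_bound[OF j] leaf_bounds[OF j(1)] j(2) by simp
qed

text \<open>With a tight hub, withdrawing human service \<open>\<beta> * SP\<close> from the hub keeps it tight once the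
  leaves give up the stock \<open>SP\<close> in total; the hub's then unserved demand is carried to the leaves
  by autonomous vehicles.\<close>

lemma hub_shift_no_gain:
  fixes dl' ml' :: "nat \<Rightarrow> real"
  defines "c \<equiv> \<beta> * d 1 / (real n - 1)" and "SP \<equiv> \<Sum>l\<in>{2..n}. m l - ml' l"
  assumes tight: "d 1 = \<beta> * (\<Sum>l\<in>{2..n}. m l)" and SP: "0 \<le> SP"
    and leaves: "\<And>l. l \<in> {2..n} \<Longrightarrow> 0 \<le> ml' l \<and> ml' l \<le> dl' l \<and> dl' l \<le> 1 \<and> d l \<le> dl' l
      \<and> (ml' l < dl' l \<longrightarrow> c - \<beta> * (\<beta> * SP / (real n - 1)) \<le> ml' l)"
  shows "(\<Sum>l\<in>{2..n}. leaf_profit (\<omega> * (1 - \<beta>)) s (c - \<beta> * (\<beta> * SP / (real n - 1)))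
      (\<beta> * SP / (real n - 1)) (dl' l) (ml' l) + \<omega> * (1 - \<beta>) * \<beta> * (m l - ml' l))
    \<le> (\<Sum>l\<in>{2..n}. leaf_profit (\<omega> * (1 - \<beta>)) s c 0 (d l) (m l))"
proof -
  define d' where "d' = dl'(1 := d 1)"
  define m' where "m' = ml'(1 := d 1 - \<beta> * SP)"
  have m': "m' 1 = d 1 - \<beta> * SP" and d': "d' 1 = d 1"
    and leaf: "\<And>l. l \<in> {2..n} \<Longrightarrow> d' l = dl' l \<and> m' l = ml' l"
    unfolding d'_def m'_def by auto
  have sum_m': "(\<Sum>l\<in>{2..n}. m' l) = (\<Sum>l\<in>{2..n}. m l) - SP"
    using leaf unfolding SP_def sum_subtractf by simp
  have "SP \<le> (\<Sum>l\<in>{2..n}. m l)"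
    unfolding SP_def using leaves by (intro sum_mono) auto
  then have hub_stock: "\<beta> * SP \<le> d 1" "0 \<le> \<beta> * SP" "\<beta> * SP \<le> SP"
    using tight beta SP by (simp_all add: mult_left_le_one_le)
  have stock': "\<beta> * m' 1 / (real n - 1) = c - \<beta> * (\<beta> * SP / (real n - 1))"
    unfolding m' c_def by (simp add: algebra_simps diff_divide_distrib)
  have "reduced_feasible n 0 \<beta> d' m'"
  proof (rule reduced_feasible_starI[OF n2])
    fix l assume l: "l \<in> {2..n}"
    show "0 \<le> m' l \<and> m' l \<le> d' l \<and> d' l \<le> 1"
      using leaves[OF l] leaf[OF l] by simp
    show "m' l < d' l \<Longrightarrow> \<beta> * m' 1 / (real n - 1) \<le> m' l"
      using leaves[OF l] leaf[OF l] stock' by simp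
  next
    show "\<beta> * (\<Sum>l\<in>{2..n}. m' l) \<le> m' 1"
      unfolding sum_m' m' tight by (simp add: algebra_simps)
  qed (use m' d' hub_stock hub_bounds in auto)
  then have le: "reduced_obj n 0 \<beta> \<omega> s d' m' \<le> reduced_obj n 0 \<beta> \<omega> s d m"
    by (rule optimal)
  have "(\<Sum>l\<in>{2..n}. d l - m l) + SP \<le> (\<Sum>l\<in>{2..n}. d' l - m' l)"
    unfolding SP_def sum.distrib[symmetric] using leaves leaf by (intro sum_mono) auto
  then have "d' 1 - m' 1 \<le> (\<Sum>l\<in>{2..n}. d' l - m' l)"
    using hub_stock m' d' leaf_bounds sum_nonneg[of "{2..n}" "\<lambda>l. d l - m l"] by force
  note star = reduced_obj_star[OF n2 this]
  have hub_cost: "max (m' 1) (\<beta> * (\<Sum>l\<in>{2..n}. m' l)) = d 1 - \<beta> * SP"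
    "max (d 1) (\<beta> * (\<Sum>l\<in>{2..n}. m l)) = d 1"
    unfolding sum_m' m' using tight by (simp_all add: algebra_simps)
  have "(\<Sum>l\<in>{2..n}. leaf_profit (\<omega> * (1 - \<beta>)) s (c - \<beta> * (\<beta> * SP / (real n - 1)))
      (\<beta> * SP / (real n - 1)) (d' l) (m' l)) = (\<Sum>l\<in>{2..n}. leaf_profit (\<omega> * (1 - \<beta>)) s
      (c - \<beta> * (\<beta> * SP / (real n - 1))) (\<beta> * SP / (real n - 1)) (dl' l) (ml' l))"
    using leaf by (intro sum.cong) auto
  then have "reduced_obj n 0 \<beta> \<omega> s d' m' = d 1 * (1 - d 1) - \<omega> * (1 - \<beta>) * (d 1 - \<beta> * SP)
      + (\<Sum>l\<in>{2..n}. leaf_profit (\<omega> * (1 - \<beta>)) s (c - \<beta> * (\<beta> * SP / (real n - 1)))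
          (\<beta> * SP / (real n - 1)) (dl' l) (ml' l))"
    unfolding star unfolding hub_cost stock' d' unfolding m' by simp
  moreover have "(\<Sum>l\<in>{2..n}. \<omega> * (1 - \<beta>) * \<beta> * (m l - ml' l)) = \<omega> * (1 - \<beta>) * \<beta> * SP"
    unfolding SP_def by (simp add: sum_distrib_left)
  ultimately show ?thesis
    using le unfolding optimal_value hub_cost c_def[symmetric] sum.distrib by (simp add: algebra_simps)
qed

lemma tight_hub_no_improvement:
  fixes \<eta> :: real
  defines "c \<equiv> \<beta> * d 1 / (real n - 1)"
  assumes tight: "d 1 = \<beta> * (\<Sum>l\<in>{2..n}. m l)"
    and small: "2 * s < \<omega> * (1 - \<beta>) * (1 + \<beta>)"
    and excess: "lP \<in> {2..n}" "c < m lP"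
    and short: "\<And>l. l \<in> {2..n} \<Longrightarrow> m l < c \<Longrightarrow> s \<le> \<omega> * (1 - \<beta>) * \<beta>"
    and \<eta>: "0 < \<eta>" "\<eta> \<le> 1 - 2 * c - 2 * s"
      "\<And>l. l \<in> {2..n} \<Longrightarrow> m l \<noteq> c \<Longrightarrow> \<eta> \<le> \<bar>m l - c\<bar>"
      "\<And>l. l \<in> {2..n} \<Longrightarrow> m l = c \<Longrightarrow> m l < d l \<Longrightarrow> \<eta> \<le> d l - m l"
  shows False
proof -
  define k where "k = \<omega> * (1 - \<beta>)"
  define ml' where "ml' l = (if c < m l then m l - \<eta> else m l)" for l
  define SP where "SP = (\<Sum>l\<in>{2..n}. m l - ml' l)"
  define g where "g = \<beta> * SP / (real n - 1)"
  define dl' where "dl' l = (if m l = c \<and> d l = m l then d l + g else d l)" for l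
  have terms: "m l - ml' l = (if c < m l then \<eta> else 0)" for l
    unfolding ml'_def by simp
  have SP: "\<eta> \<le> SP" "SP \<le> (real n - 1) * \<eta>"
    using member_le_sum[of lP "{2..n}" "\<lambda>l. m l - ml' l"] excess \<eta>(1) n3
      sum_mono[of "{2..n}" "\<lambda>l. m l - ml' l" "\<lambda>_. \<eta>"] unfolding SP_def terms by auto
  have c: "0 \<le> c" unfolding c_def using beta hub_bounds n3 by simp
  have g: "0 < g" "g \<le> \<eta>"
  proof -
    show "0 < g" unfolding g_def using SP \<eta>(1) beta n3 by simp
    have "\<beta> * SP \<le> SP" using SP \<eta>(1) beta by (simp add: mult_left_le_one_le)
    then show "g \<le> \<eta>" unfolding g_def using SP n3 by (simp add: divide_le_eq mult.commute)
  qed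
  have leaf: "0 \<le> ml' l" "ml' l \<le> dl' l" "dl' l \<le> 1" "ml' l < dl' l \<Longrightarrow> c - \<beta> * g \<le> ml' l"
      "d l \<le> dl' l"
      "leaf_profit k s c 0 (d l) (m l) \<le> leaf_profit k s (c - \<beta> * g) g (dl' l) (ml' l) + k * \<beta> * (m l - ml' l)"
      "c < m l \<Longrightarrow> leaf_profit k s c 0 (d l) (m l)
         < leaf_profit k s (c - \<beta> * g) g (dl' l) (ml' l) + k * \<beta> * (m l - ml' l)"
    if l: "l \<in> {2..n}" for l
    unfolding dl'_def ml'_def
    using leaf_profit_tight_perturbation[OF less_imp_le[OF beta(1)] less_imp_le[OF beta(2)] s_nonneg
        small[folded k_def, unfolded mult.assoc] c leaf_bounds[OF l] unserved_leaf_stock[OF l, folded c_def]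
        g \<eta>(2) \<eta>(3)[OF l] \<eta>(4)[OF l] short[OF l, folded k_def]]
    by blast+
  have "(\<Sum>l\<in>{2..n}. leaf_profit k s c 0 (d l) (m l))
      < (\<Sum>l\<in>{2..n}. leaf_profit k s (c - \<beta> * g) g (dl' l) (ml' l) + k * \<beta> * (m l - ml' l))"
  proof (rule sum_strict_mono_ex1)
    show "\<exists>l\<in>{2..n}. leaf_profit k s c 0 (d l) (m l)
        < leaf_profit k s (c - \<beta> * g) g (dl' l) (ml' l) + k * \<beta> * (m l - ml' l)"
      using leaf(7) excess by blast
  qed (use leaf(6) in auto)
  moreover have "(\<Sum>l\<in>{2..n}. leaf_profit k s (c - \<beta> * g) g (dl' l) (ml' l) + k * \<beta> * (m l - ml' l))
      \<le> (\<Sum>l\<in>{2..n}. leaf_profit k s c 0 (d l) (m l))"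
    unfolding k_def g_def c_def SP_def
    by (rule hub_shift_no_gain[OF tight]) (use SP \<eta>(1) leaf in \<open>auto simp: g_def SP_def c_def\<close>)
  ultimately show False
    by simp
qed

lemma tight_hub_leaves_served:
  assumes tight: "d 1 = \<beta> * (\<Sum>l\<in>{2..n}. m l)" and pos: "0 < d 1"
    and small: "2 * s < \<omega> * (1 - \<beta>) * (1 + \<beta>)"
  shows "\<forall>l\<in>{2..n}. m l = d l"
proof (rule ccontr)
  define c where "c = \<beta> * d 1 / (real n - 1)"
  assume "\<not> (\<forall>l\<in>{2..n}. m l = d l)"
  then obtain j where j: "j \<in> {2..n}" "m j < d j"
    using leaf_bounds by force
  have margin: "0 < 1 - 2 * c - 2 * s"
    using unserved_leaf_demand_bound[OF j] unserved_leaf_stock[OF j] j(2) unfolding c_def by linarith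
  have short: "s \<le> \<omega> * (1 - \<beta>) * \<beta>" if "l \<in> {2..n}" "m l < c" for l
  proof -
    have "d l = m l"
      using leaf_bounds[OF that(1)] unserved_leaf_stock[OF that(1)] that(2) unfolding c_def by force
    then show ?thesis
      using short_leaf_demand_bound[OF tight that[unfolded c_def]] unserved_leaf_demand_bound[OF j]
        unserved_leaf_stock[OF j] j(2) that(2) s_nonneg unfolding c_def by linarith
  qed
  obtain lP where lP: "lP \<in> {2..n}" "c < m lP"
    using excess_leaf_exists tight pos unfolding c_def by force
  define bound where "bound l = (if m l \<noteq> c then \<bar>m l - c\<bar> else if m l < d l then d l - m l else 1)" for l
  define \<eta> where "\<eta> = Min (insert (1 - 2 * c - 2 * s) (bound ` {2..n}))"
  have "0 < bound l" for l
    unfolding bound_def by auto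
  then have \<eta>: "0 < \<eta>" "\<eta> \<le> 1 - 2 * c - 2 * s"
    using margin unfolding \<eta>_def by simp_all
  have bound: "\<eta> \<le> bound l" if "l \<in> {2..n}" for l
    unfolding \<eta>_def using that by (intro Min_le) auto
  have far: "\<eta> \<le> \<bar>m l - c\<bar>" if "l \<in> {2..n}" "m l \<noteq> c" for l
    using bound[OF that(1)] that(2) unfolding bound_def by simp
  have idle: "\<eta> \<le> d l - m l" if "l \<in> {2..n}" "m l = c" "m l < d l" for l
    using bound[OF that(1)] that(2,3) unfolding bound_def by simp
  show False
    by (rule tight_hub_no_improvement[OF tight small lP[unfolded c_def] short[unfolded c_def]
          \<eta>[unfolded c_def] far[unfolded c_def] idle[unfolded c_def]])
qed

lemma leaves_served:
  assumes small: "2 * s < \<omega> * (1 - \<beta>) * (1 + \<beta>)"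
  shows "\<forall>l\<in>{2..n}. m l = d l"
proof (rule ccontr)
  assume "\<not> (\<forall>l\<in>{2..n}. m l = d l)"
  then obtain j where j: "j \<in> {2..n}" "m j < d j"
    using leaf_bounds by force
  have tight: "d 1 = \<beta> * (\<Sum>l\<in>{2..n}. m l)"
    using hub_demand_le_leaf_inflow[OF j small] leaf_inflow_le_hub_demand[OF small] by simp
  then have "0 < d 1"
    using hub_demand_pos[OF j] by simp
  then show False
    using tight_hub_leaves_served[OF tight _ small] j by auto
qed

lemma le_full_service: "reduced_obj n 0 \<beta> \<omega> s d m \<le> reduced_obj n 0 \<beta> \<omega> s d d"
proof (cases "2 * s < \<omega> * (1 - \<beta>) * (1 + \<beta>)")
  case True
  then have "m i = d i" if "i \<in> {1..n}" for i
    using leaves_served hub_served that by (cases "i = 1") auto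
  then have "reduced_obj n 0 \<beta> \<omega> s d m = reduced_obj n 0 \<beta> \<omega> s d d"
    by (rule reduced_obj_cong)
  then show ?thesis by simp
next
  case False
  then show ?thesis
    by (intro star_full_service_dominates[OF n2]) (use beta omega hub_served leaf_bounds in auto)
qed

end

section \<open>Nodes without autonomous rebalancing\<close>

lemma reduced_optimum_le_full_service:
  assumes "n \<ge> 3" "0 \<le> \<xi>" "\<xi> \<le> 1" "0 < \<beta>" "\<beta> < 1" "0 < \<omega>" "0 \<le> s"
    and red: "reduced_feasible n \<xi> \<beta> d m"
    and opt: "\<And>d' m'. reduced_feasible n \<xi> \<beta> d' m' \<Longrightarrow>
      reduced_obj n \<xi> \<beta> \<omega> s d' m' \<le> reduced_obj n \<xi> \<beta> \<omega> s d m"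
    and i: "i \<in> {1..n}" and idle: "max (d i - m i) (inflow n \<xi> (\<lambda>j. d j - m j) i) \<le> 0"
  shows "reduced_obj n \<xi> \<beta> \<omega> s d m \<le> reduced_obj n \<xi> \<beta> \<omega> s d d"
proof -
  have n2: "n \<ge> 2" using assms(1) by simp
  have u: "\<forall>j\<in>{1..n}. 0 \<le> d j - m j"
    using red unfolding reduced_feasible_def by auto
  then have "0 \<le> inflow n \<xi> (\<lambda>j. d j - m j) i"
    by (rule inflow_nonneg[OF n2 assms(2,3)])
  then have ui: "m i = d i" and "inflow n \<xi> (\<lambda>j. d j - m j) i = 0"
    using idle u i by (simp_all add: antisym)
  then have served: "m j = d j" if "j \<in> {1..n}" "0 < alpha n \<xi> j i" for j
    using inflow_eq_zero_imp[OF n2 assms(2,3) u _ that] by simp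
  show ?thesis
  proof (cases "0 < \<xi> \<or> i = 1")
    case True
    have "m j = d j" if "j \<in> {1..n}" for j
      using served[OF that] alpha_pos[OF n2 assms(2,3), of j i] ui True by (cases "j = i") auto
    then have "reduced_obj n \<xi> \<beta> \<omega> s d m = reduced_obj n \<xi> \<beta> \<omega> s d d"
      by (rule reduced_obj_cong)
    then show ?thesis by simp
  next
    case False
    then have \<xi>: "\<xi> = 0" and "i \<noteq> 1"
      using assms(2) by auto
    then have "m 1 = d 1"
      using served alpha_pos[OF n2 assms(2,3), of 1 i] n2 by simp
    then interpret star_optimum n \<beta> \<omega> s d m
      using assms(1,4-7) red opt unfolding \<xi> by unfold_locales
    show ?thesis
      using le_full_service unfolding \<xi> .
  qed
qed

theorem lemma2:
  fixes n :: nat and \<xi> \<beta> \<omega> s :: real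
    and p \<delta> x z :: "nat \<Rightarrow> real" and y r :: "nat \<Rightarrow> nat \<Rightarrow> real"
  assumes "n \<ge> 3"
    and "0 \<le> \<xi>" and "\<xi> \<le> 1"
    and "0 < \<beta>" and "\<beta> < 1"
    and "\<omega> > 0" and "s \<ge> 0"
    and "optval_mixed n \<xi> \<beta> \<omega> s > optval_human n \<xi> \<beta> \<omega> s"
    and "optimal_P4 n \<xi> \<beta> \<omega> s p \<delta> x y z r"
  shows "\<forall>i\<in>{1..n}. z i > 0"
proof (rule ccontr)
  assume "\<not> (\<forall>i\<in>{1..n}. z i > 0)"
  then obtain i where i: "i \<in> {1..n}" "z i \<le> 0"
    by auto
  have n2: "n \<ge> 2" and beta: "0 \<le> \<beta>" "\<beta> \<le> 1"
    using assms(1,4,5) by auto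
  interpret feasible_point n \<xi> \<beta> p \<delta> x y z r
    using n2 beta assms(9) unfolding optimal_P4_def by unfold_locales auto
  define d where "d = (\<lambda>j. demand (p j))"
  define m where "m = (\<lambda>j. min (x j) (demand (p j)))"
  note opt = optimal_P4_reduced_optimum[OF n2 beta less_imp_le[OF assms(6)] assms(7,9), folded d_def m_def]
  have idle: "max (d i - m i) (inflow n \<xi> (\<lambda>j. d j - m j) i) \<le> 0"
    unfolding d_def m_def by (rule order_trans[OF rebalancing_lower_bound[OF i(1)] i(2)])
  have "optval_mixed n \<xi> \<beta> \<omega> s = reduced_obj n \<xi> \<beta> \<omega> s d m"
    by (rule opt(2))
  also have "\<dots> \<le> reduced_obj n \<xi> \<beta> \<omega> s d d"
    by (rule reduced_optimum_le_full_service[OF assms(1-7) opt(1) _ i(1) idle]) (rule opt(3))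
  also have "\<dots> \<le> optval_human n \<xi> \<beta> \<omega> s"
    using full_service_le_optval_human[OF n2 beta assms(9)] demand_bounds by (simp add: d_def)
  finally show False
    using assms(8) by simp
qed
end
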